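(* Let $F$ be a Ferrers diagram of semiperimeter $n+1$, $T\in\mathsf{EWtab}(F)$ and $(a_1,\ldots,a_n)\in\mathbb{Z}^n$. Then $(T,(a_1,\ldots,a_n))\in\mathsf{Rec}_{\mathsf{EW}}(F)$ if and only if $(\Psi(T),(a_1,\ldots,a_n))$ is a canonical decorated permutation.
   Context: Ferrers diagrams and graphs: a Ferrers diagram $F$ (English convention) of semiperimeter $n+1$ has rows and columns labeled by $0,\ldots,n$: the $n+1$ unit steps of its south-east boundary path, traversed from top-right to bottom-left, are labeled $0,\ldots,n$; a vertical step labels the row it bounds, a horizontal step the column it bounds (top row labeled $0$). $\mathsf{rows}(F)$, $\mathsf{cols}(F)$ are the label sets; $F$ has a cell in row $i$, column $j$ iff $i<j$. $G(F)$ has vertex set $\{0,\ldots,n\}$ with edges $\{i,j\}$ for $i\in\mathsf{rows}(F)$, $j\in\mathsf{cols}(F)$, $i<j$. Sandpile model on $G(F)$ with sink $0$: configurations $c\in\mathbb{N}^n$; non-sink $v$ unstable if $c_v\ge\deg(v)$; toppling sends one grain to each neighbour (grains to $0$ disappear); toppling the sink adds one grain to each neighbour of $0$. Recurrent: stable configurations obtainable from $c_v=\deg(v)-1$ by adding grains and stabilizing; $\mathsf{Rec}(G)$ their set; $\mathsf{Rec}^{\mathsf{min}}(G)$: recurrent configurations of minimal total grain count. Canonical toppling of a recurrent $c$: topple the sink ($U^{(0)}_c=\{0\}$), then alternately topple simultaneously all unstable vertices in $\mathsf{cols}(F)$ ($V^{(1)}_c$), all unstable in $\mathsf{rows}(F)$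 ($U^{(1)}_c$), etc.; $\mathsf{CanonTop}(c)=(U^{(0)}_c,V^{(1)}_c,U^{(1)}_c,\ldots)$ is an ordered partition of $\{0,\ldots,n\}$. For $c\in\mathsf{Rec}(G(F))$, $\mathsf{minrec}(c)$ is the configuration $m$ with $m_j=|\{\ell\in V^{(k)}_c: j<\ell,\ k>i\}|$ if $j\in U^{(i)}_c$ and $m_j=|\{\ell\in U^{(k)}_c: j>\ell,\ k\ge i\}|$ if $j\in V^{(i)}_c$. EW-tableaux: $0/1$-fillings $T$ of $F$ with top row all 1s, a 0 in every other row, and no rectangle with 0s in two diagonally opposite corners and 1s in the other two; $\mathsf{EWtab}(F)$ is their set. $\phi_{TC}(T)$ is the configuration with $c_i$ = number of 1s in row $i$ ($i\in\mathsf{rows}(F)$), $c_i$ = number of 0s in column $i$ ($i\in\mathsf{cols}(F)$); $\phi_{TC}$ is a bijection $\mathsf{EWtab}(F)\to\mathsf{Rec}^{\mathsf{min}}(G(F))$ with inverse $\phi_{CT}$. $\mathsf{CanonTop}(T):=\mathsf{CanonTop}(\phi_{TC}(T))=(U^{(0)}_T,V^{(1)}_T,U^{(1)}_T,\ldots)$. $\Psi(T)$ is the permutation of $[n]$ given by the word $\mathsf{inc}(V^{(1)}_T)\,\mathsf{dec}(U^{(1)}_T)\,\mathsf{inc}(V^{(2)}_T)\cdots$ (inc/dec = increasing/decreasing listing). A decorated EW-tableau is a pair $(T,(x_1,\ldots,x_n))$ with $T\in\mathsf{EWtab}(F)$, $0\le x_i<$ (number of 0s in row $i$ of $T$) for $i\in\mathsf{rows}(F)$,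 $0\le x_i<$ (number of 1s in column $i$ of $T$) for $i\in\mathsf{cols}(F)$. Define $\psi(x)=(\phi_{CT}(\mathsf{minrec}(x)),x-\mathsf{minrec}(x))$ for $x\in\mathsf{Rec}(G(F))$ and $\mathsf{Rec}_{\mathsf{EW}}(F)=\psi(\mathsf{Rec}(G(F)))$. Permutations: for a permutation $\pi=\pi_1\cdots\pi_n$ of $[n]$, $\pi_i$ is an ascent top if $i=1$ or $\pi_{i-1}<\pi_i$, a descent bottom if $\pi_{i-1}>\pi_i$. $\mathsf{RunDec}(\pi)=(D^{(0)}_\pi,A^{(1)}_\pi,D^{(1)}_\pi,A^{(2)}_\pi,\ldots)$ with $D^{(0)}_\pi=\{0\}$ followed by the letter sets of the maximal factors of $\pi$ consisting alternately of ascent tops ($A$-blocks) and descent bottoms ($D$-blocks). A (stable) decorated permutation is $(\pi,(a_1,\ldots,a_n))$ with $0\le a_i<|\{j\in A^{(k)}_\pi: j>i,\ k\le\ell\}|$ if $i\in D^{(\ell)}_\pi$ and $0\le a_i<|\{j\in D^{(k)}_\pi: j<i,\ k<\ell\}|$ if $i\in A^{(\ell)}_\pi$. It is canonical if moreover $a_i<\mu_i(\pi)$ for all $i$, where $\mu_i(\pi)=|\{j\in A^{(\ell)}_\pi: j>i\}|$ if $i\in D^{(\ell)}_\pi$ and $\mu_i(\pi)=|\{j\in D^{(\ell-1)}_\pi: j<i\}|$ if $i\in A^{(\ell)}_\pi$. *)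

theory Defs
  imports Main
begin

text \<open>A Ferrers diagram F of semiperimeter n+1 is encoded by its set R = rows(F) of
  row labels, a subset of {0..n}. The boundary path starts with a vertical step
  (top row labelled 0) and ends with a horizontal step (leftmost column labelled n),
  so 0 is a row label and n is a column label; every such set arises from exactly
  one Ferrers diagram.\<close>

definition ferrers :: "nat \<Rightarrow> nat set \<Rightarrow> bool" where
  "ferrers n R \<longleftrightarrow> R \<subseteq> {0..n} \<and> 0 \<in> R \<and> n \<notin> R"

definition cols :: "nat \<Rightarrow> nat set \<Rightarrow> nat set" where
  "cols n R = {0..n} - R"

definition cell :: "nat \<Rightarrow> nat set \<Rightarrow> nat \<Rightarrow> nat \<Rightarrow> bool" where
  "cell n R i j \<longleftrightarrow> i \<in> R \<and> j \<in> cols n R \<and> i < j"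

definition adj :: "nat \<Rightarrow> nat set \<Rightarrow> nat \<Rightarrow> nat \<Rightarrow> bool" where
  "adj n R u v \<longleftrightarrow> cell n R u v \<or> cell n R v u"

definition deg :: "nat \<Rightarrow> nat set \<Rightarrow> nat \<Rightarrow> nat" where
  "deg n R v = card {u \<in> {0..n}. adj n R u v}"

definition config :: "nat \<Rightarrow> (nat \<Rightarrow> nat) \<Rightarrow> bool" where
  "config n c \<longleftrightarrow> (\<forall>i. i \<notin> {1..n} \<longrightarrow> c i = 0)"

definition stable :: "nat \<Rightarrow> nat set \<Rightarrow> (nat \<Rightarrow> nat) \<Rightarrow> bool" where
  "stable n R c \<longleftrightarrow> (\<forall>v\<in>{1..n}. c v < deg n R v)"

text \<open>Toppling one unstable non-sink vertex (grains sent to the sink disappear).\<close>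
definition topple_step :: "nat \<Rightarrow> nat set \<Rightarrow> (nat \<Rightarrow> nat) \<Rightarrow> (nat \<Rightarrow> nat) \<Rightarrow> bool" where
  "topple_step n R c c' \<longleftrightarrow>
     (\<exists>v\<in>{1..n}. deg n R v \<le> c v \<and>
        c' = (\<lambda>u. if u = v then c u - deg n R v
                  else if u \<in> {1..n} \<and> adj n R v u then c u + 1 else c u))"

definition cmax :: "nat \<Rightarrow> nat set \<Rightarrow> nat \<Rightarrow> nat" where
  "cmax n R i = (if i \<in> {1..n} then deg n R i - 1 else 0)"

text \<open>Recurrent configurations: stable configurations obtainable from c_max by adding
  grains and stabilizing (adding all grains first is equivalent, by the abelian property).\<close>
definition Rec :: "nat \<Rightarrow> nat set \<Rightarrow> (nat \<Rightarrow> nat) set" where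
  "Rec n R = {c. config n c \<and> stable n R c \<and>
      (\<exists>d. config n d \<and> (topple_step n R)\<^sup>*\<^sup>* (\<lambda>i. cmax n R i + d i) c)}"

definition topple_sink :: "nat \<Rightarrow> nat set \<Rightarrow> (nat \<Rightarrow> nat) \<Rightarrow> (nat \<Rightarrow> nat)" where
  "topple_sink n R c = (\<lambda>u. if u \<in> {1..n} \<and> adj n R 0 u then c u + 1 else c u)"

definition topple_set :: "nat \<Rightarrow> nat set \<Rightarrow> (nat \<Rightarrow> nat) \<Rightarrow> nat set \<Rightarrow> (nat \<Rightarrow> nat)" where
  "topple_set n R c S = (\<lambda>u. if u \<in> {1..n}
       then (c u + card {v \<in> S. adj n R v u}) - (if u \<in> S then deg n R u else 0)
       else c u)"

text \<open>Phase 0 is the sink toppling; odd phases topple the unstable column vertices,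
  even phases \<ge> 2 the unstable (non-sink) row vertices.\<close>
fun ctphase :: "nat \<Rightarrow> nat set \<Rightarrow> (nat \<Rightarrow> nat) \<Rightarrow> nat \<Rightarrow> nat set \<times> (nat \<Rightarrow> nat)" where
  "ctphase n R c 0 = ({0}, topple_sink n R c)"
| "ctphase n R c (Suc k) =
     (let cur = snd (ctphase n R c k);
          S = {v \<in> {1..n}. v \<in> (if even k then cols n R else R) \<and> deg n R v \<le> cur v}
      in (S, topple_set n R cur S))"

definition Ublk :: "nat \<Rightarrow> nat set \<Rightarrow> (nat \<Rightarrow> nat) \<Rightarrow> nat \<Rightarrow> nat set" where
  "Ublk n R c i = fst (ctphase n R c (2 * i))"

definition Vblk :: "nat \<Rightarrow> nat set \<Rightarrow> (nat \<Rightarrow> nat) \<Rightarrow> nat \<Rightarrow> nat set" where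
  "Vblk n R c i = (if i = 0 then {} else fst (ctphase n R c (2 * i - 1)))"

definition minrec :: "nat \<Rightarrow> nat set \<Rightarrow> (nat \<Rightarrow> nat) \<Rightarrow> (nat \<Rightarrow> nat)" where
  "minrec n R c = (\<lambda>j. if j \<in> {1..n} then
       (if \<exists>i. j \<in> Ublk n R c i
        then card {l. \<exists>i k. j \<in> Ublk n R c i \<and> k > i \<and> l \<in> Vblk n R c k \<and> j < l}
        else card {l. \<exists>i k. j \<in> Vblk n R c i \<and> k \<ge> i \<and> l \<in> Ublk n R c k \<and> j > l})
     else 0)"

text \<open>A 0/1 filling of F is a predicate T with T i j = True meaning a 1 in cell (i,j);
  it is False outside the cells of F.\<close>
definition EWtab :: "nat \<Rightarrow> nat set \<Rightarrow> (nat \<Rightarrow> nat \<Rightarrow> bool) set" where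
  "EWtab n R = {T.
     (\<forall>i j. T i j \<longrightarrow> cell n R i j) \<and>
     (\<forall>j. cell n R 0 j \<longrightarrow> T 0 j) \<and>
     (\<forall>i\<in>R. i \<noteq> 0 \<longrightarrow> (\<exists>j. cell n R i j \<and> \<not> T i j)) \<and>
     (\<forall>i i' j j'. i < i' \<and> j < j' \<and> cell n R i j \<and> cell n R i j' \<and>
                  cell n R i' j \<and> cell n R i' j' \<longrightarrow>
        \<not> (\<not> T i j \<and> \<not> T i' j' \<and> T i j' \<and> T i' j) \<and>
        \<not> (\<not> T i j' \<and> \<not> T i' j \<and> T i j \<and> T i' j'))}"

definition phiTC :: "nat \<Rightarrow> nat set \<Rightarrow> (nat \<Rightarrow> nat \<Rightarrow> bool) \<Rightarrow> (nat \<Rightarrow> nat)" where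
  "phiTC n R T = (\<lambda>i. if i \<in> {1..n} then
       (if i \<in> R then card {j. cell n R i j \<and> T i j}
        else card {k. cell n R k i \<and> \<not> T k i})
     else 0)"

definition phiCT :: "nat \<Rightarrow> nat set \<Rightarrow> (nat \<Rightarrow> nat) \<Rightarrow> (nat \<Rightarrow> nat \<Rightarrow> bool)" where
  "phiCT n R c = the_inv_into (EWtab n R) (phiTC n R) c"

text \<open>Rec_EW(F) = psi(Rec(G(F))); decorations are functions vanishing outside {1..n}.\<close>
definition RecEW :: "nat \<Rightarrow> nat set \<Rightarrow> ((nat \<Rightarrow> nat \<Rightarrow> bool) \<times> (nat \<Rightarrow> int)) set" where
  "RecEW n R = (\<lambda>x. (phiCT n R (minrec n R x),
                      \<lambda>i. if i \<in> {1..n} then int (x i) - int (minrec n R x i) else 0))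
               ` Rec n R"

text \<open>Psi(T) = inc(V^(1)) dec(U^(1)) inc(V^(2)) dec(U^(2)) ...; blocks beyond index n are empty.\<close>
definition Psi :: "nat \<Rightarrow> nat set \<Rightarrow> (nat \<Rightarrow> nat \<Rightarrow> bool) \<Rightarrow> nat list" where
  "Psi n R T = concat (map (\<lambda>i. sorted_list_of_set (Vblk n R (phiTC n R T) i)
                              @ rev (sorted_list_of_set (Ublk n R (phiTC n R T) i))) [1..<n+1])"

definition asc_pos :: "nat list \<Rightarrow> nat \<Rightarrow> bool" where
  "asc_pos \<pi> p \<longleftrightarrow> p = 0 \<or> \<pi> ! (p - 1) < \<pi> ! p"

text \<open>Index (starting at 1) of the maximal factor of equal type containing position p.\<close>
definition run_no :: "nat list \<Rightarrow> nat \<Rightarrow> nat" where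
  "run_no \<pi> p = 1 + card {q. 1 \<le> q \<and> q \<le> p \<and> asc_pos \<pi> q \<noteq> asc_pos \<pi> (q - 1)}"

definition Ablk :: "nat list \<Rightarrow> nat \<Rightarrow> nat set" where
  "Ablk \<pi> l = (if l = 0 then {} else
     {\<pi> ! p | p. p < length \<pi> \<and> asc_pos \<pi> p \<and> run_no \<pi> p = 2 * l - 1})"

definition Dblk :: "nat list \<Rightarrow> nat \<Rightarrow> nat set" where
  "Dblk \<pi> l = (if l = 0 then {0} else
     {\<pi> ! p | p. p < length \<pi> \<and> \<not> asc_pos \<pi> p \<and> run_no \<pi> p = 2 * l})"

definition is_perm :: "nat \<Rightarrow> nat list \<Rightarrow> bool" where
  "is_perm n \<pi> \<longleftrightarrow> distinct \<pi> \<and> set \<pi> = {1..n}"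

definition decorated_perm :: "nat \<Rightarrow> nat list \<Rightarrow> (nat \<Rightarrow> int) \<Rightarrow> bool" where
  "decorated_perm n \<pi> a \<longleftrightarrow> is_perm n \<pi> \<and>
     (\<forall>i\<in>{1..n}. 0 \<le> a i \<and>
        (\<forall>l. i \<in> Dblk \<pi> l \<longrightarrow>
            a i < int (card {j. \<exists>k. k \<le> l \<and> j \<in> Ablk \<pi> k \<and> j > i})) \<and>
        (\<forall>l. i \<in> Ablk \<pi> l \<longrightarrow>
            a i < int (card {j. \<exists>k. k < l \<and> j \<in> Dblk \<pi> k \<and> j < i})))"

definition mu :: "nat list \<Rightarrow> nat \<Rightarrow> nat" where
  "mu \<pi> i = (if \<exists>l. i \<in> Dblk \<pi> l
     then card {j \<in> Ablk \<pi> (THE l. i \<in> Dblk \<pi> l). j > i}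
     else card {j \<in> Dblk \<pi> ((THE l. i \<in> Ablk \<pi> l) - 1). j < i})"

definition canonical_decorated_perm :: "nat \<Rightarrow> nat list \<Rightarrow> (nat \<Rightarrow> int) \<Rightarrow> bool" where
  "canonical_decorated_perm n \<pi> a \<longleftrightarrow> decorated_perm n \<pi> a \<and>
     (\<forall>i\<in>{1..n}. a i < int (mu \<pi> i))"

end

theory Submission
  imports Defs
begin

text \<open>
  Everything is read off from burning times. A configuration c is recurrent iff its canonical
  toppling topples every vertex, and then exactly once (Dhar's burning criterion); let t v be the
  phase in which v topples. The number of grains c v then lies between the number of neighbours
  of v burning after v and that number plus the number of neighbours burning exactly one phase
  before v, and conversely every configuration within these bounds has the same burning times.
  The minimal recurrent configuration with burning times t is given by the lower bound; it comes
  from the EW-tableau with a 1 in cell (i, j) iff t i < t j. So psi splits c into this tableau and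
  a decoration a with 0 \<le> a v < (number of neighbours burning one phase before v).

  On the permutation side, Psi(T) lists the vertices by burning time, so its ascent tops are the
  columns (odd times) and its descent bottoms the rows (even times), and its run decomposition is
  the partition by burning time: A-blocks are the odd and D-blocks the even phases. Hence
  mu_v(Psi T) is again the number of neighbours of v burning one phase before v.
\<close>

lemma sorted_wrt_concat_map:
  assumes "\<And>i. sorted_wrt r (f i)"
    and "\<And>i j a b. i < j \<Longrightarrow> a \<in> set (f i) \<Longrightarrow> b \<in> set (f j) \<Longrightarrow> r a b"
    and "sorted_wrt (<) xs"
  shows "sorted_wrt r (concat (map f xs))"
  using assms(3) by (induction xs) (auto simp: sorted_wrt_append assms(1,2))

lemma nth_Collect_eq_set_filter: "{xs ! p | p. p < length xs \<and> P (xs ! p)} = {x \<in> set xs. P x}"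
  by (auto simp: in_set_conv_nth)

locale ferrers_diagram =
  fixes n :: nat and R :: "nat set"
  assumes ferrers: "ferrers n R"
begin

lemma R_subset: "R \<subseteq> {0..n}" and zero_in_R: "0 \<in> R" and n_notin_R: "n \<notin> R"
  using ferrers by (auto simp: ferrers_def)

lemma n_ge_1: "1 \<le> n"
  using zero_in_R n_notin_R by (cases n) auto

lemma cell_iff: "cell n R i j \<longleftrightarrow> i \<in> R \<and> j \<le> n \<and> j \<notin> R \<and> i < j"
  unfolding cell_def cols_def by auto

lemma adj_commute: "adj n R u v = adj n R v u"
  by (auto simp: adj_def)

lemma adjD: "adj n R u v \<Longrightarrow> u \<le> n \<and> v \<le> n \<and> u \<noteq> v \<and> (u \<in> R \<longleftrightarrow> v \<notin> R)"
  using R_subset by (auto simp: adj_def cell_iff)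

definition nbhd :: "nat \<Rightarrow> nat set" where
  "nbhd v = {u \<in> {0..n}. adj n R u v}"

lemma finite_nbhd [simp]: "finite (nbhd v)"
  by (simp add: nbhd_def)

lemma nbhd_subset: "nbhd v \<subseteq> {0..n}"
  by (auto simp: nbhd_def)

lemma mem_nbhd_iff: "u \<in> nbhd v \<longleftrightarrow> adj n R u v"
  using adjD by (auto simp: nbhd_def)

lemma deg_eq_card_nbhd: "deg n R v = card (nbhd v)"
  by (simp add: deg_def nbhd_def)

lemma deg_le_Suc_n: "deg n R v \<le> Suc n"
proof -
  have "card (nbhd v) \<le> card {0..n}" by (rule card_mono) (auto simp: nbhd_def)
  thus ?thesis by (simp add: deg_eq_card_nbhd)
qed

lemma nbhd_row: "v \<in> R \<Longrightarrow> nbhd v = {j. cell n R v j}"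
  by (auto simp: mem_nbhd_iff adj_def cell_iff)

lemma nbhd_col: "v \<notin> R \<Longrightarrow> nbhd v = {i. cell n R i v}"
  by (auto simp: mem_nbhd_iff adj_def cell_iff)

lemma adj_0_col: "v \<le> n \<Longrightarrow> v \<notin> R \<Longrightarrow> adj n R 0 v"
  using zero_in_R by (cases "v = 0") (auto simp: adj_def cell_iff)

lemma zero_in_nbhd_col: "v \<le> n \<Longrightarrow> v \<notin> R \<Longrightarrow> 0 \<in> nbhd v"
  using adj_0_col mem_nbhd_iff by blast

lemma n_in_nbhd_row: assumes "v \<in> R" shows "n \<in> nbhd v"
proof -
  have "v < n" using assms R_subset n_notin_R
    by (metis atLeastAtMost_iff le_neq_implies_less subsetD)
  thus ?thesis using assms n_notin_R by (simp add: mem_nbhd_iff adj_def cell_iff)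
qed

lemma deg_pos: "v \<le> n \<Longrightarrow> 1 \<le> deg n R v"
  using n_in_nbhd_row zero_in_nbhd_col
  by (cases "v \<in> R") (auto simp: deg_eq_card_nbhd Suc_le_eq card_gt_0_iff)

subsection \<open>The phases of the canonical toppling\<close>

definition phase_set :: "(nat \<Rightarrow> nat) \<Rightarrow> nat \<Rightarrow> nat set" where
  "phase_set c p = fst (ctphase n R c p)"

definition phase_config :: "(nat \<Rightarrow> nat) \<Rightarrow> nat \<Rightarrow> nat \<Rightarrow> nat" where
  "phase_config c p = snd (ctphase n R c p)"

definition toppled_before :: "(nat \<Rightarrow> nat) \<Rightarrow> nat \<Rightarrow> nat set" where
  "toppled_before c p = (\<Union>q<p. phase_set c q)"

text \<open>Phase k + 1 topples vertices of phase_class k: columns for odd, rows for even phases.\<close>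
definition phase_class :: "nat \<Rightarrow> nat set" where
  "phase_class k = (if even k then cols n R else R)"

lemma phase_set_0: "phase_set c 0 = {0}"
  by (simp add: phase_set_def)

lemma phase_config_0: "phase_config c 0 = topple_sink n R c"
  by (simp add: phase_config_def)

lemma phase_set_Suc:
  "phase_set c (Suc k) = {v \<in> {1..n}. v \<in> phase_class k \<and> deg n R v \<le> phase_config c k v}"
  by (simp add: phase_set_def phase_config_def phase_class_def Let_def)

lemma phase_config_Suc:
  "phase_config c (Suc k) = topple_set n R (phase_config c k) (phase_set c (Suc k))"
  by (simp add: phase_set_def phase_config_def Let_def)

lemma toppled_before_Suc: "toppled_before c (Suc k) = toppled_before c k \<union> phase_set c k"
  by (auto simp: toppled_before_def less_Suc_eq)

lemma toppled_before_1: "toppled_before c (Suc 0) = {0}"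
  by (auto simp: toppled_before_def phase_set_0)

lemma toppled_before_mono: "p \<le> q \<Longrightarrow> toppled_before c p \<subseteq> toppled_before c q"
  unfolding toppled_before_def by (blast intro: less_le_trans)

lemma phase_set_subset: "phase_set c p \<subseteq> {0..n}"
  by (cases p) (auto simp: phase_set_0 phase_set_Suc)

lemma finite_phase_set: "finite (phase_set c p)"
  using phase_set_subset by (rule finite_subset) simp

lemma phase_class_iff: "v \<le> n \<Longrightarrow> v \<in> phase_class k \<longleftrightarrow> (even k \<longleftrightarrow> v \<notin> R)"
  by (auto simp: phase_class_def cols_def)

lemma ex_phase_class_ge: assumes "v \<le> n" shows "\<exists>k\<ge>K. v \<in> phase_class k"
proof -
  have "v \<in> phase_class K \<or> v \<in> phase_class (Suc K)"
    using phase_class_iff[OF assms, of K] phase_class_iff[OF assms, of "Suc K"] by auto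
  thus ?thesis by (meson le_Suc_eq order_refl)
qed

lemma phase_set_parity: "v \<in> phase_set c p \<Longrightarrow> odd p \<longleftrightarrow> v \<notin> R"
  using zero_in_R by (cases p)
    (auto simp: phase_set_0 phase_set_Suc phase_class_def cols_def split: if_splits)

definition grain_balance :: "(nat \<Rightarrow> nat) \<Rightarrow> nat \<Rightarrow> bool" where
  "grain_balance c k \<longleftrightarrow>
     (\<forall>u\<in>{1..n}. phase_config c k u + (if u \<in> toppled_before c (Suc k) then deg n R u else 0)
                 = c u + card (nbhd u \<inter> toppled_before c (Suc k))) \<and>
     (\<forall>u. u \<notin> {1..n} \<longrightarrow> phase_config c k u = c u)"

lemma grain_balanceD:
  "grain_balance c k \<Longrightarrow> u \<in> {1..n} \<Longrightarrow>
     phase_config c k u + (if u \<in> toppled_before c (Suc k) then deg n R u else 0)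
       = c u + card (nbhd u \<inter> toppled_before c (Suc k))"
  unfolding grain_balance_def by blast

lemma grain_balance_0: "grain_balance c 0"
  unfolding grain_balance_def toppled_before_1 phase_config_0 topple_sink_def
  by (auto simp: mem_nbhd_iff)

lemma grain_balance_Suc:
  assumes bal: "grain_balance c k"
    and disj: "phase_set c (Suc k) \<inter> toppled_before c (Suc k) = {}"
  shows "grain_balance c (Suc k)"
  unfolding grain_balance_def
proof (intro conjI ballI allI impI)
  fix u assume u: "u \<in> {1..n}"
  let ?B = "toppled_before c (Suc k)" and ?X = "phase_set c (Suc k)"
  have "nbhd u \<inter> (?B \<union> ?X) = (nbhd u \<inter> ?B) \<union> (nbhd u \<inter> ?X)"
    and "(nbhd u \<inter> ?B) \<inter> (nbhd u \<inter> ?X) = {}" using disj by blast+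
  hence card_split: "card (nbhd u \<inter> (?B \<union> ?X)) = card (nbhd u \<inter> ?B) + card (nbhd u \<inter> ?X)"
    by (simp add: card_Un_disjoint)
  have "{w \<in> ?X. adj n R w u} = nbhd u \<inter> ?X" by (auto simp: mem_nbhd_iff)
  hence new: "phase_config c (Suc k) u
      = (phase_config c k u + card (nbhd u \<inter> ?X)) - (if u \<in> ?X then deg n R u else 0)"
    using u by (simp add: phase_config_Suc topple_set_def)
  have "u \<in> ?X \<Longrightarrow> u \<notin> ?B \<and> deg n R u \<le> phase_config c k u"
    using disj by (auto simp: phase_set_Suc)
  then show "phase_config c (Suc k) u
      + (if u \<in> toppled_before c (Suc (Suc k)) then deg n R u else 0)
      = c u + card (nbhd u \<inter> toppled_before c (Suc (Suc k)))"
    using grain_balanceD[OF bal u] new card_split by (auto simp: toppled_before_Suc)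
next
  fix u :: nat assume u: "u \<notin> {1..n}"
  have "phase_config c (Suc k) u = phase_config c k u"
    by (simp only: phase_config_Suc topple_set_def if_not_P[OF u])
  thus "phase_config c (Suc k) u = c u" using bal u by (simp add: grain_balance_def)
qed

text \<open>Stability is what prevents a vertex from toppling twice: a toppled vertex retains at most
  c v < deg v grains.\<close>
lemma phase_set_disjoint_toppled:
  assumes st: "stable n R c" and bal: "grain_balance c k"
  shows "phase_set c (Suc k) \<inter> toppled_before c (Suc k) = {}"
proof (rule ccontr)
  assume "phase_set c (Suc k) \<inter> toppled_before c (Suc k) \<noteq> {}"
  then obtain v where v: "v \<in> phase_set c (Suc k)" "v \<in> toppled_before c (Suc k)" by blast
  have vr: "v \<in> {1..n}" and dl: "deg n R v \<le> phase_config c k v"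
    using v by (auto simp: phase_set_Suc)
  have "phase_config c k v + deg n R v = c v + card (nbhd v \<inter> toppled_before c (Suc k))"
    using grain_balanceD[OF bal vr] v by simp
  moreover have "card (nbhd v \<inter> toppled_before c (Suc k)) \<le> deg n R v"
    by (simp add: deg_eq_card_nbhd card_mono)
  moreover have "c v < deg n R v" using st vr by (simp add: stable_def)
  ultimately show False using dl by linarith
qed

lemma grain_balance:
  assumes st: "stable n R c"
  shows "grain_balance c k \<and> phase_set c (Suc k) \<inter> toppled_before c (Suc k) = {}"
proof (induction k)
  case 0 thus ?case using grain_balance_0 phase_set_disjoint_toppled[OF st] by blast
next
  case (Suc k) thus ?case using grain_balance_Suc phase_set_disjoint_toppled[OF st] by blast
qed

lemma phase_set_Suc_iff:
  assumes st: "stable n R c"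
  shows "v \<in> phase_set c (Suc k) \<longleftrightarrow> v \<in> {1..n} \<and> v \<in> phase_class k \<and>
           v \<notin> toppled_before c (Suc k) \<and> card (nbhd v - toppled_before c (Suc k)) \<le> c v"
proof -
  let ?B = "toppled_before c (Suc k)"
  have bal: "grain_balance c k" and disj: "phase_set c (Suc k) \<inter> ?B = {}"
    using grain_balance[OF st] by auto
  have split: "card (nbhd v) = card (nbhd v \<inter> ?B) + card (nbhd v - ?B)"
    by (metis card_Int_Diff finite_nbhd)
  have config: "phase_config c k v = c v + card (nbhd v \<inter> ?B)" if "v \<in> {1..n}" "v \<notin> ?B"
    using grain_balanceD[OF bal that(1)] that(2) by simp
  show ?thesis
  proof
    assume v: "v \<in> phase_set c (Suc k)"
    hence "v \<in> {1..n}" "v \<in> phase_class k" "deg n R v \<le> phase_config c k v"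
      by (auto simp: phase_set_Suc)
    moreover have "v \<notin> ?B" using v disj by blast
    ultimately show "v \<in> {1..n} \<and> v \<in> phase_class k \<and> v \<notin> ?B \<and> card (nbhd v - ?B) \<le> c v"
      using config split by (simp add: deg_eq_card_nbhd)
  qed (use config split in \<open>simp add: phase_set_Suc deg_eq_card_nbhd\<close>)
qed

lemma phase_set_disjoint:
  assumes st: "stable n R c" and "q < p" "v \<in> phase_set c p"
  shows "v \<notin> phase_set c q"
proof -
  obtain k where p: "p = Suc k" using assms(2) by (cases p) auto
  have "phase_set c q \<subseteq> toppled_before c p" using assms(2) by (auto simp: toppled_before_def)
  thus ?thesis using phase_set_Suc_iff[OF st, of v k] assms p by auto
qed

lemma phase_set_unique:
  "stable n R c \<Longrightarrow> v \<in> phase_set c p \<Longrightarrow> v \<in> phase_set c q \<Longrightarrow> p = q"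
  using phase_set_disjoint by (metis nat_neq_iff)

subsection \<open>Burning configurations\<close>

definition burns :: "(nat \<Rightarrow> nat) \<Rightarrow> bool" where
  "burns c \<longleftrightarrow> (\<forall>v\<in>{0..n}. \<exists>p. v \<in> phase_set c p)"

definition burn_time :: "(nat \<Rightarrow> nat) \<Rightarrow> nat \<Rightarrow> nat" where
  "burn_time c v = (LEAST p. v \<in> phase_set c p)"

definition later_degree :: "(nat \<Rightarrow> nat) \<Rightarrow> nat \<Rightarrow> nat" where
  "later_degree t v = card {u \<in> nbhd v. t v < t u}"

definition prev_degree :: "(nat \<Rightarrow> nat) \<Rightarrow> nat \<Rightarrow> nat" where
  "prev_degree t v = card {u \<in> nbhd v. Suc (t u) = t v}"

definition burning_bounds :: "(nat \<Rightarrow> nat) \<Rightarrow> (nat \<Rightarrow> nat) \<Rightarrow> bool" where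
  "burning_bounds t x \<longleftrightarrow>
     (\<forall>v\<in>{1..n}. later_degree t v \<le> x v \<and> x v < later_degree t v + prev_degree t v)"

lemma burn_time_eq: "stable n R c \<Longrightarrow> v \<in> phase_set c p \<Longrightarrow> burn_time c v = p"
  unfolding burn_time_def by (rule Least_equality) (auto dest: phase_set_unique)

lemma finite_subset_toppled_before:
  assumes "finite A" "\<forall>u\<in>A. \<exists>p. u \<in> phase_set c p"
  shows "\<exists>K. A \<subseteq> toppled_before c K"
  using assms
proof (induction A rule: finite_induct)
  case empty thus ?case by auto
next
  case (insert x F)
  then obtain K where K: "F \<subseteq> toppled_before c K" by auto
  obtain p where p: "x \<in> phase_set c p" using insert by auto
  have "F \<subseteq> toppled_before c (max K (Suc p))"
    using K toppled_before_mono[of K "max K (Suc p)" c] by auto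
  moreover have "x \<in> toppled_before c (max K (Suc p))" using p by (auto simp: toppled_before_def)
  ultimately show ?case by blast
qed

context
  fixes c assumes st: "stable n R c" and bu: "burns c"
begin

lemma phase_set_burn_time: "v \<le> n \<Longrightarrow> v \<in> phase_set c (burn_time c v)"
  using bu unfolding burns_def burn_time_def by (auto intro: LeastI)

lemma mem_phase_set_iff: "v \<in> phase_set c p \<longleftrightarrow> v \<le> n \<and> burn_time c v = p"
  using phase_set_subset burn_time_eq[OF st] phase_set_burn_time by fastforce

lemma mem_toppled_before_iff: "v \<le> n \<Longrightarrow> v \<in> toppled_before c p \<longleftrightarrow> burn_time c v < p"
  by (auto simp: toppled_before_def mem_phase_set_iff)

lemma nbhd_diff_toppled_before: "nbhd v - toppled_before c p = {u \<in> nbhd v. p \<le> burn_time c u}"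
  using nbhd_subset by (force simp: mem_toppled_before_iff)

lemma burn_time_eq_0_iff: "v \<le> n \<Longrightarrow> burn_time c v = 0 \<longleftrightarrow> v = 0"
  using mem_phase_set_iff[of v 0] by (auto simp: phase_set_0)

lemma burn_time_pos: "v \<in> {1..n} \<Longrightarrow> 1 \<le> burn_time c v"
  using burn_time_eq_0_iff by force

lemma odd_burn_time_iff: "v \<le> n \<Longrightarrow> odd (burn_time c v) \<longleftrightarrow> v \<notin> R"
  using phase_set_parity phase_set_burn_time by blast

lemma burn_time_parity_nbhd: "u \<in> nbhd v \<Longrightarrow> odd (burn_time c u) \<longleftrightarrow> even (burn_time c v)"
  using adjD odd_burn_time_iff by (simp add: mem_nbhd_iff)

lemma burn_time_nbhd_neq: "u \<in> nbhd v \<Longrightarrow> burn_time c u \<noteq> burn_time c v"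
  using burn_time_parity_nbhd by force

lemma phase_class_iff_burn_time: "v \<le> n \<Longrightarrow> v \<in> phase_class k \<longleftrightarrow> (even k \<longleftrightarrow> odd (burn_time c v))"
  using phase_class_iff odd_burn_time_iff by simp

lemma later_degree_le: assumes v: "v \<in> {1..n}" shows "later_degree (burn_time c) v \<le> c v"
proof -
  obtain k where k: "burn_time c v = Suc k"
    using burn_time_pos[OF v] by (cases "burn_time c v") auto
  have "v \<in> phase_set c (Suc k)" using phase_set_burn_time v k by fastforce
  hence "card (nbhd v - toppled_before c (Suc k)) \<le> c v" using phase_set_Suc_iff[OF st] by blast
  moreover have "nbhd v - toppled_before c (Suc k) = {u \<in> nbhd v. burn_time c v < burn_time c u}"
    unfolding nbhd_diff_toppled_before k using burn_time_nbhd_neq k by fastforce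
  ultimately show ?thesis by (simp add: later_degree_def)
qed

lemma card_nbhd_not_early:
  "card {u \<in> nbhd v. burn_time c v \<le> Suc (burn_time c u)}
     = later_degree (burn_time c) v + prev_degree (burn_time c) v"
proof -
  have "{u \<in> nbhd v. burn_time c v \<le> Suc (burn_time c u)}
      = {u \<in> nbhd v. burn_time c v < burn_time c u} \<union>
        {u \<in> nbhd v. Suc (burn_time c u) = burn_time c v}"
    using burn_time_nbhd_neq by fastforce
  moreover have "{u \<in> nbhd v. burn_time c v < burn_time c u}
      \<inter> {u \<in> nbhd v. Suc (burn_time c u) = burn_time c v} = {}" by auto
  ultimately show ?thesis unfolding later_degree_def prev_degree_def by (simp add: card_Un_disjoint)
qed

text \<open>If v burns at phase k + 3 or later, it was eligible but did not topple at phase k + 1.\<close>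
lemma less_later_plus_prev_degree:
  assumes v: "v \<in> {1..n}"
  shows "c v < later_degree (burn_time c) v + prev_degree (burn_time c) v"
proof (cases "burn_time c v \<le> 2")
  case True
  have "burn_time c v \<le> Suc (burn_time c u)" if u: "u \<in> nbhd v" for u
  proof (cases "burn_time c v = 2")
    case True
    hence "odd (burn_time c u)" using burn_time_parity_nbhd[OF u] by simp
    thus ?thesis using True by (cases "burn_time c u") auto
  qed (use \<open>burn_time c v \<le> 2\<close> in simp)
  hence "{u \<in> nbhd v. burn_time c v \<le> Suc (burn_time c u)} = nbhd v" by auto
  moreover have "c v < deg n R v" using st v by (simp add: stable_def)
  ultimately have "c v < card {u \<in> nbhd v. burn_time c v \<le> Suc (burn_time c u)}"
    by (simp add: deg_eq_card_nbhd)
  thus ?thesis using card_nbhd_not_early by simp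
next
  case False
  define k where "k = burn_time c v - 3"
  have k: "burn_time c v = Suc (Suc (Suc k))" using False by (simp add: k_def)
  have vn: "v \<le> n" using v by simp
  have "v \<notin> phase_set c (Suc k)" and "v \<in> phase_class k" and "v \<notin> toppled_before c (Suc k)"
    using mem_phase_set_iff phase_class_iff_burn_time[OF vn] mem_toppled_before_iff[OF vn] k by auto
  hence "c v < card (nbhd v - toppled_before c (Suc k))"
    using phase_set_Suc_iff[OF st, of v k] v by auto
  moreover have "nbhd v - toppled_before c (Suc k)
    = {u \<in> nbhd v. burn_time c v \<le> Suc (burn_time c u)}"
  proof -
    have "Suc k \<le> burn_time c u \<longleftrightarrow> burn_time c v \<le> Suc (burn_time c u)" if u: "u \<in> nbhd v" for u
      using burn_time_parity_nbhd[OF u] k by (cases "burn_time c u = Suc k") auto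
    thus ?thesis unfolding nbhd_diff_toppled_before by blast
  qed
  ultimately show ?thesis using card_nbhd_not_early by simp
qed

lemma prev_degree_pos: "v \<in> {1..n} \<Longrightarrow> 1 \<le> prev_degree (burn_time c) v"
  using later_degree_le less_later_plus_prev_degree by fastforce

lemma ex_prev_nbr:
  assumes "v \<in> {1..n}" shows "\<exists>u\<in>nbhd v. Suc (burn_time c u) = burn_time c v"
proof -
  have "{u \<in> nbhd v. Suc (burn_time c u) = burn_time c v} \<noteq> {}"
    using prev_degree_pos[OF assms] unfolding prev_degree_def by (metis card.empty not_one_le_zero)
  thus ?thesis by blast
qed

lemma all_toppled_before: "\<exists>K. {0..n} \<subseteq> toppled_before c K"
  using finite_subset_toppled_before[of "{0..n}" c] bu by (simp add: burns_def)

text \<open>If v burns at phase k + 1, its untoppled neighbours are those burning later; otherwise it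
  burns at phase k + 3 or later, and they include all neighbours burning from phase
  burn_time c v - 1 on.\<close>
lemma card_untoppled_le_iff:
  assumes bounds: "burning_bounds (burn_time c) x"
    and v: "v \<in> {1..n}" "v \<in> phase_class k" "v \<notin> toppled_before c (Suc k)"
  shows "card (nbhd v - toppled_before c (Suc k)) \<le> x v \<longleftrightarrow> burn_time c v = Suc k"
proof -
  let ?B = "toppled_before c (Suc k)"
  have ge: "Suc k \<le> burn_time c v" using mem_toppled_before_iff v by simp
  have par: "burn_time c v \<noteq> Suc (Suc k)" using phase_class_iff_burn_time v by auto
  have "nbhd v - ?B = {u \<in> nbhd v. burn_time c v < burn_time c u}" if "burn_time c v = Suc k"
    unfolding nbhd_diff_toppled_before using that burn_time_nbhd_neq by fastforce
  moreover have "{u \<in> nbhd v. burn_time c v \<le> Suc (burn_time c u)} \<subseteq> nbhd v - ?B"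
    if "burn_time c v \<noteq> Suc k"
    unfolding nbhd_diff_toppled_before using that ge par by auto
  hence "card {u \<in> nbhd v. burn_time c v \<le> Suc (burn_time c u)} \<le> card (nbhd v - ?B)"
    if "burn_time c v \<noteq> Suc k" using that by (intro card_mono) auto
  moreover have "later_degree (burn_time c) v \<le> x v"
    and "x v < later_degree (burn_time c) v + prev_degree (burn_time c) v"
    using bounds v by (auto simp: burning_bounds_def)
  ultimately show ?thesis
    using card_nbhd_not_early[of v] by (cases "burn_time c v = Suc k") (auto simp: later_degree_def)
qed

end

lemma stable_if_burning_bounds:
  assumes "stable n R c" "burns c" "burning_bounds (burn_time c) x"
  shows "stable n R x"
  unfolding stable_def
proof
  fix v assume v: "v \<in> {1..n}"
  have "card {u \<in> nbhd v. burn_time c v \<le> Suc (burn_time c u)} \<le> card (nbhd v)"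
    by (rule card_mono) auto
  moreover have "x v < later_degree (burn_time c) v + prev_degree (burn_time c) v"
    using assms(3) v by (simp add: burning_bounds_def)
  ultimately show "x v < deg n R v"
    using card_nbhd_not_early[OF assms(1,2), of v] by (simp add: deg_eq_card_nbhd)
qed

lemma phase_set_eq_if_burning_bounds:
  assumes st: "stable n R c" and bu: "burns c" and bounds: "burning_bounds (burn_time c) x"
  shows "phase_set x p = phase_set c p"
proof (induction p rule: less_induct)
  case (less p)
  show ?case
  proof (cases p)
    case 0 thus ?thesis by (simp add: phase_set_0)
  next
    case (Suc k)
    have B: "toppled_before x (Suc k) = toppled_before c (Suc k)"
      using less Suc by (auto simp: toppled_before_def)
    show ?thesis
    proof (rule set_eqI)
      fix v
      show "v \<in> phase_set x p \<longleftrightarrow> v \<in> phase_set c p"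
        using phase_set_Suc_iff[OF stable_if_burning_bounds[OF assms], of v k]
          phase_set_Suc_iff[OF st, of v k] card_untoppled_le_iff[OF st bu bounds, of v k]
          mem_phase_set_iff[OF st bu, of v "Suc k"] B Suc
        by auto
    qed
  qed
qed

lemma burn_time_eq_if_burning_bounds:
  assumes "stable n R c" "burns c" "burning_bounds (burn_time c) x"
  shows "burns x" "burn_time x = burn_time c"
  using phase_set_eq_if_burning_bounds[OF assms] assms(2)
  by (simp_all add: burns_def burn_time_def fun_eq_iff)

subsection \<open>Dhar's burning criterion\<close>

definition forbidden :: "(nat \<Rightarrow> nat) \<Rightarrow> nat set \<Rightarrow> bool" where
  "forbidden x W \<longleftrightarrow> W \<subseteq> {1..n} \<and> W \<noteq> {} \<and> (\<forall>v\<in>W. x v < card (nbhd v \<inter> W))"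

text \<open>A forbidden set of cmax + d would be closed under neighbours, hence would contain the
  sink 0, which is a neighbour of n, which in turn is a neighbour of every row.\<close>
lemma not_forbidden_cmax: "\<not> forbidden (\<lambda>i. cmax n R i + d i) W"
proof
  assume "forbidden (\<lambda>i. cmax n R i + d i) W"
  hence W: "W \<subseteq> {1..n}" "W \<noteq> {}" and less: "\<forall>v\<in>W. cmax n R v + d v < card (nbhd v \<inter> W)"
    by (auto simp: forbidden_def)
  have closed: "nbhd v \<subseteq> W" if v: "v \<in> W" for v
  proof -
    have "v \<in> {1..n}" using W v by auto
    hence "card (nbhd v) \<le> card (nbhd v \<inter> W)"
      using less v deg_pos[of v] by (fastforce simp: cmax_def deg_eq_card_nbhd)
    hence "nbhd v \<inter> W = nbhd v" by (intro card_seteq) auto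
    thus ?thesis by blast
  qed
  obtain v where v: "v \<in> W" using W by blast
  have "0 \<in> W"
  proof (cases "v \<in> R")
    case True
    hence "n \<in> W" using closed[OF v] n_in_nbhd_row by blast
    thus ?thesis using closed zero_in_nbhd_col[of n] n_notin_R by blast
  next
    case False
    have "v \<le> n" using v W by auto
    thus ?thesis using closed[OF v] zero_in_nbhd_col False by blast
  qed
  thus False using W by auto
qed

lemma card_nbhd_Int_le:
  "card (nbhd u \<inter> W) \<le> card (nbhd u \<inter> (W - {v})) + (if adj n R v u then 1 else 0)"
proof (cases "adj n R v u")
  case True
  have "card (nbhd u \<inter> W) \<le> card (insert v (nbhd u \<inter> (W - {v})))" by (intro card_mono) auto
  also have "\<dots> \<le> Suc (card (nbhd u \<inter> (W - {v})))" by (simp add: card_insert_le_m1)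
  finally show ?thesis using True by simp
next
  case False
  hence "nbhd u \<inter> W = nbhd u \<inter> (W - {v})" by (auto simp: mem_nbhd_iff adj_commute)
  thus ?thesis by simp
qed

text \<open>If the toppled vertex v lies in a forbidden set W of the new configuration, then
  W - {v} is forbidden before the toppling: each u loses at most the grain received from v.\<close>
lemma topple_step_not_forbidden:
  assumes step: "topple_step n R y z" and y: "\<forall>W. \<not> forbidden y W"
  shows "\<not> forbidden z W"
proof
  assume "forbidden z W"
  hence W: "W \<subseteq> {1..n}" "W \<noteq> {}" and less: "\<forall>u\<in>W. z u < card (nbhd u \<inter> W)"
    by (auto simp: forbidden_def)
  from step obtain v where
    z: "z = (\<lambda>u. if u = v then y u - deg n R v
                 else if u \<in> {1..n} \<and> adj n R v u then y u + 1 else y u)"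
    unfolding topple_step_def by blast
  show False
  proof (cases "v \<in> W")
    case False
    have "z u \<ge> y u" if "u \<in> W" for u using that False z by auto
    hence "forbidden y W" using W less by (fastforce simp: forbidden_def)
    thus False using y by blast
  next
    case True
    have "W \<noteq> {v}"
    proof
      assume "W = {v}"
      hence "nbhd v \<inter> W = {}" using adjD by (auto simp: mem_nbhd_iff)
      thus False using less True by fastforce
    qed
    hence "W - {v} \<subseteq> {1..n}" "W - {v} \<noteq> {}" using W True by auto
    moreover have "y u < card (nbhd u \<inter> (W - {v}))" if u: "u \<in> W - {v}" for u
    proof -
      have "z u = y u + (if adj n R v u then 1 else 0)" using z u W by auto
      thus ?thesis using less u card_nbhd_Int_le[of u W v] by fastforce
    qed
    ultimately have "forbidden y (W - {v})" by (simp add: forbidden_def)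
    thus False using y by blast
  qed
qed

lemma topple_steps_not_forbidden:
  assumes "(topple_step n R)\<^sup>*\<^sup>* (\<lambda>i. cmax n R i + d i) x"
  shows "\<not> forbidden x W"
  using assms
proof (induction arbitrary: W rule: rtranclp_induct)
  case base show ?case by (rule not_forbidden_cmax)
next
  case (step y z) thus ?case using topple_step_not_forbidden by blast
qed

text \<open>The vertices that never topple would form a forbidden set.\<close>
lemma Rec_burns:
  assumes "c \<in> Rec n R" shows "burns c"
proof (rule ccontr)
  have st: "stable n R c" using assms unfolding Rec_def by blast
  obtain d where d: "(topple_step n R)\<^sup>*\<^sup>* (\<lambda>i. cmax n R i + d i) c"
    using assms unfolding Rec_def by blast
  define W where "W = {v \<in> {0..n}. \<forall>p. v \<notin> phase_set c p}"
  assume "\<not> burns c"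
  hence "W \<noteq> {}" by (auto simp: burns_def W_def)
  moreover have W: "W \<subseteq> {1..n}" using phase_set_0[of c] by (fastforce simp: W_def)
  ultimately obtain v where v: "v \<in> W" "card (nbhd v \<inter> W) \<le> c v"
    using topple_steps_not_forbidden[OF d, of W] by (auto simp: forbidden_def not_less)
  have vr: "v \<in> {1..n}" using v W by blast
  have "\<forall>u\<in>nbhd v - W. \<exists>p. u \<in> phase_set c p"
    using nbhd_subset[of v] by (auto simp: W_def)
  then obtain K where K: "nbhd v - W \<subseteq> toppled_before c K"
    using finite_subset_toppled_before[of "nbhd v - W" c] by auto
  obtain k where k: "k \<ge> K" "v \<in> phase_class k" using ex_phase_class_ge[of v K] vr by auto
  have "toppled_before c K \<subseteq> toppled_before c (Suc k)" using toppled_before_mono k by simp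
  hence "nbhd v - toppled_before c (Suc k) \<subseteq> nbhd v \<inter> W" using K by auto
  hence "card (nbhd v - toppled_before c (Suc k)) \<le> card (nbhd v \<inter> W)" by (intro card_mono) auto
  hence "card (nbhd v - toppled_before c (Suc k)) \<le> c v" using v(2) by linarith
  moreover have "v \<notin> toppled_before c (Suc k)" using v(1) by (auto simp: W_def toppled_before_def)
  ultimately have "v \<in> phase_set c (Suc k)" using phase_set_Suc_iff[OF st] vr k by blast
  thus False using v(1) by (auto simp: W_def)
qed

lemma topple_step_add:
  assumes "topple_step n R y y'"
  shows "topple_step n R (\<lambda>u. y u + e u) (\<lambda>u. y' u + e u)"
proof -
  from assms obtain v where v: "v \<in> {1..n}" "deg n R v \<le> y v"
    and y': "y' = (\<lambda>u. if u = v then y u - deg n R v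
                      else if u \<in> {1..n} \<and> adj n R v u then y u + 1 else y u)"
    unfolding topple_step_def by blast
  have "(\<lambda>u. y' u + e u) = (\<lambda>u. if u = v then (y u + e u) - deg n R v
      else if u \<in> {1..n} \<and> adj n R v u then (y u + e u) + 1 else y u + e u)"
    using v y' by (auto simp: fun_eq_iff)
  thus ?thesis unfolding topple_step_def using v by force
qed

lemma topple_steps_add:
  "(topple_step n R)\<^sup>*\<^sup>* y y' \<Longrightarrow> (topple_step n R)\<^sup>*\<^sup>* (\<lambda>u. y u + e u) (\<lambda>u. y' u + e u)"
  by (induction rule: rtranclp_induct) (auto intro: rtranclp.rtrancl_into_rtrancl topple_step_add)

lemma topple_set_insert:
  assumes x: "x \<in> {1..n}" "x \<notin> F" and "finite F" and indep: "\<forall>w\<in>F. \<not> adj n R w x"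
  shows "topple_set n R y (insert x F) =
    (\<lambda>u. if u = x then topple_set n R y F u - deg n R x
         else if u \<in> {1..n} \<and> adj n R x u then topple_set n R y F u + 1 else topple_set n R y F u)"
proof
  fix u
  have "{w \<in> insert x F. adj n R w u} =
      (if adj n R x u then insert x {w \<in> F. adj n R w u} else {w \<in> F. adj n R w u})"
    by auto
  moreover have "u \<notin> F" if "adj n R x u" using that indep adj_commute by auto
  moreover have "{w \<in> F. adj n R w x} = {}" and "\<not> adj n R x x" using indep adjD by auto
  ultimately show "topple_set n R y (insert x F) u = (if u = x then topple_set n R y F u - deg n R x
      else if u \<in> {1..n} \<and> adj n R x u then topple_set n R y F u + 1 else topple_set n R y F u)"
    using x \<open>finite F\<close> by (auto simp: topple_set_def)
qed

lemma topple_steps_topple_set: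
  assumes "finite A" "A \<subseteq> {1..n}" "\<forall>u\<in>A. \<forall>v\<in>A. \<not> adj n R u v" "\<forall>v\<in>A. deg n R v \<le> y v"
  shows "(topple_step n R)\<^sup>*\<^sup>* y (topple_set n R y A)"
  using assms
proof (induction A rule: finite_induct)
  case empty
  have "topple_set n R y {} = y" by (auto simp: topple_set_def fun_eq_iff)
  thus ?case by simp
next
  case (insert x F)
  have x: "x \<in> {1..n}" "x \<notin> F" and indep: "\<forall>w\<in>F. \<not> adj n R w x" using insert by auto
  have "{w \<in> F. adj n R w x} = {}" using indep by auto
  hence "deg n R x \<le> topple_set n R y F x" using x insert.prems(3) by (simp add: topple_set_def)
  hence "topple_step n R (topple_set n R y F) (topple_set n R y (insert x F))"
    unfolding topple_set_insert[OF x insert.hyps(1) indep] topple_step_def using x by blast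
  moreover have "(topple_step n R)\<^sup>*\<^sup>* y (topple_set n R y F)" using insert by auto
  ultimately show ?case by simp
qed

lemma topple_steps_phase:
  assumes st: "stable n R c"
  shows "(topple_step n R)\<^sup>*\<^sup>* (phase_config c k) (phase_config c (Suc k))"
proof -
  have sub: "phase_set c (Suc k) \<subseteq> {1..n}" by (auto simp: phase_set_Suc)
  moreover have "\<forall>u\<in>phase_set c (Suc k). \<forall>v\<in>phase_set c (Suc k). \<not> adj n R u v"
    using adjD phase_class_iff by (fastforce simp: phase_set_Suc)
  moreover have "\<forall>v\<in>phase_set c (Suc k). deg n R v \<le> phase_config c k v"
    by (auto simp: phase_set_Suc)
  ultimately show ?thesis
    using topple_steps_topple_set finite_phase_set by (simp add: phase_config_Suc)
qed

lemma topple_steps_phases: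
  "stable n R c \<Longrightarrow> (topple_step n R)\<^sup>*\<^sup>* (phase_config c 0) (phase_config c k)"
  by (induction k) (auto intro: rtranclp_trans topple_steps_phase)

lemma phase_config_eventually_eq:
  assumes st: "stable n R c" and bu: "burns c"
  shows "\<exists>K. phase_config c K = c"
proof -
  obtain K where K: "{0..n} \<subseteq> toppled_before c (Suc K)"
    using all_toppled_before[OF st bu] toppled_before_mono[of _ "Suc _" c]
      by (meson le_SucI order_refl subset_trans)
  have bal: "grain_balance c K" using grain_balance[OF st] by blast
  have "phase_config c K u = c u" for u
  proof (cases "u \<in> {1..n}")
    case True
    have "nbhd u \<inter> toppled_before c (Suc K) = nbhd u" using K nbhd_subset by blast
    thus ?thesis using grain_balanceD[OF bal True] K True by (auto simp: deg_eq_card_nbhd)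
  next
    case False thus ?thesis using bal unfolding grain_balance_def by blast
  qed
  thus ?thesis by blast
qed

definition sink_grains :: "nat \<Rightarrow> nat" where
  "sink_grains u = (if u \<in> {1..n} \<and> adj n R 0 u then 1 else 0)"

lemma phase_config_0_eq: "phase_config c 0 = (\<lambda>u. c u + sink_grains u)"
  unfolding phase_config_0 topple_sink_def sink_grains_def fun_eq_iff by simp

lemma topple_steps_sink_multiple:
  assumes st: "stable n R c" and bu: "burns c"
  shows "(topple_step n R)\<^sup>*\<^sup>* (\<lambda>u. c u + m * sink_grains u) c"
proof (induction m)
  case (Suc m)
  obtain K where K: "phase_config c K = c" using phase_config_eventually_eq[OF st bu] by blast
  have "(topple_step n R)\<^sup>*\<^sup>* (\<lambda>u. c u + sink_grains u) c"
    using topple_steps_phases[OF st, of K] by (simp add: phase_config_0_eq K)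
  from topple_steps_add[OF this, of "\<lambda>u. m * sink_grains u"]
  have "(topple_step n R)\<^sup>*\<^sup>* (\<lambda>u. c u + Suc m * sink_grains u) (\<lambda>u. c u + m * sink_grains u)"
    by (simp add: add.assoc)
  thus ?case using Suc.IH by (rule rtranclp_trans)
qed simp

lemma topple_set_rows_lift:
  assumes c: "config n c" and K: "Suc n \<le> K"
  shows "topple_set n R (\<lambda>u. if u \<in> {1..n} then (if u \<in> R then c u + deg n R u
                             else c u + K + 1 - deg n R u) else 0) (R \<inter> {1..n})
    = (\<lambda>u. c u + K * sink_grains u)"
    (is "topple_set n R ?y ?Rows = _")
proof
  fix u
  show "topple_set n R ?y ?Rows u = c u + K * sink_grains u"
  proof (cases "u \<in> {1..n}")
    case False
    have "topple_set n R ?y ?Rows u = 0" by (simp only: topple_set_def if_not_P[OF False])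
    moreover have "sink_grains u = 0" "c u = 0"
      using False c by (auto simp: sink_grains_def config_def)
    ultimately show ?thesis by simp
  next
    case u: True
    show ?thesis
    proof (cases "u \<in> R")
      case True
      hence "{w \<in> ?Rows. adj n R w u} = {}" and "\<not> adj n R 0 u" using adjD zero_in_R by blast+
      thus ?thesis using True u by (simp add: topple_set_def sink_grains_def)
    next
      case False
      have "{w \<in> ?Rows. adj n R w u} = nbhd u - {0}"
        using False adjD by (auto simp: mem_nbhd_iff)
      moreover have "0 \<in> nbhd u" using zero_in_nbhd_col u False by simp
      ultimately have "card {w \<in> ?Rows. adj n R w u} = deg n R u - 1"
        by (simp add: deg_eq_card_nbhd)
      moreover have "1 \<le> deg n R u" "deg n R u \<le> Suc n" using deg_pos deg_le_Suc_n u by auto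
      ultimately show ?thesis
        using u False K adj_0_col[of u] by (simp add: topple_set_def sink_grains_def)
    qed
  qed
qed

text \<open>The configuration cmax + d topples its rows to c + K \<cdot> (sink toppling), which in turn
  burns down to c.\<close>
lemma burns_Rec:
  assumes c: "config n c" and st: "stable n R c" and bu: "burns c"
  shows "c \<in> Rec n R"
proof -
  define K where "K = 2 * n + 2"
  define y where "y = (\<lambda>u. if u \<in> {1..n} then (if u \<in> R then c u + deg n R u
                        else c u + K + 1 - deg n R u) else 0)"
  define d where "d = (\<lambda>u. if u \<in> {1..n} then y u - cmax n R u else 0)"
  have "(topple_step n R)\<^sup>*\<^sup>* y (topple_set n R y (R \<inter> {1..n}))"
    by (rule topple_steps_topple_set) (auto simp: y_def dest: adjD)
  hence "(topple_step n R)\<^sup>*\<^sup>* y (\<lambda>u. c u + K * sink_grains u)"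
    using topple_set_rows_lift[OF c, of K] by (simp add: y_def K_def)
  hence "(topple_step n R)\<^sup>*\<^sup>* y c"
    using topple_steps_sink_multiple[OF st bu] by (rule rtranclp_trans)
  moreover have "(\<lambda>u. cmax n R u + d u) = y"
  proof
    fix u
    have "cmax n R u \<le> y u" if "u \<in> {1..n}"
      using that deg_le_Suc_n[of u] by (auto simp: cmax_def y_def K_def)
    thus "cmax n R u + d u = y u" by (simp add: d_def y_def cmax_def)
  qed
  moreover have "config n d" by (simp add: config_def d_def)
  ultimately show ?thesis unfolding Rec_def using c st by auto
qed

lemma Rec_iff_burns: "c \<in> Rec n R \<longleftrightarrow> config n c \<and> stable n R c \<and> burns c"
  using Rec_burns burns_Rec unfolding Rec_def by blast

subsection \<open>EW-tableaux and burning times\<close>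

text \<open>The intended reading: the cell joining u and v records that u burns before v.\<close>
definition precedes :: "(nat \<Rightarrow> nat \<Rightarrow> bool) \<Rightarrow> nat \<Rightarrow> nat \<Rightarrow> bool" where
  "precedes T u v \<longleftrightarrow> (cell n R u v \<and> T u v) \<or> (cell n R v u \<and> \<not> T v u)"

lemma mem_nbhd_iff_precedes: "u \<in> nbhd v \<longleftrightarrow> precedes T u v \<or> precedes T v u"
  unfolding mem_nbhd_iff adj_def precedes_def by blast

lemma precedes_asym: "precedes T u v \<Longrightarrow> \<not> precedes T v u"
  unfolding precedes_def cell_iff by auto

lemma phiTC_eq_card_succ:
  assumes v: "v \<in> {1..n}" shows "phiTC n R T v = card {u. precedes T v u}"
proof (cases "v \<in> R")
  case True
  hence "{u. precedes T v u} = {j. cell n R v j \<and> T v j}" by (auto simp: precedes_def cell_iff)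
  thus ?thesis using True v by (simp add: phiTC_def)
next
  case False
  hence "{u. precedes T v u} = {k. cell n R k v \<and> \<not> T k v}" by (auto simp: precedes_def cell_iff)
  thus ?thesis using False v by (simp add: phiTC_def)
qed

context
  fixes T assumes T: "T \<in> EWtab n R"
begin

lemma EWtab_cell: "T i j \<Longrightarrow> cell n R i j"
  using T by (simp add: EWtab_def)

lemma EWtab_top_row: "cell n R 0 j \<Longrightarrow> T 0 j"
  using T by (simp add: EWtab_def)

lemma EWtab_row_has_0: "i \<in> R \<Longrightarrow> i \<noteq> 0 \<Longrightarrow> \<exists>j. cell n R i j \<and> \<not> T i j"
  using T by (simp add: EWtab_def)

lemma EWtab_rectangle:
  assumes "i < i'" and "cell n R i j" "cell n R i j'" "cell n R i' j" "cell n R i' j'"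
    and "\<not> T i j" "T i' j" "\<not> T i' j'"
  shows "\<not> T i j'"
proof (cases j j' rule: linorder_cases)
  case less
  thus ?thesis using T assms unfolding EWtab_def by blast
next
  case equal
  thus ?thesis using assms by blast
next
  case greater
  thus ?thesis using T assms unfolding EWtab_def by blast
qed

lemma not_precedes_0: "\<not> precedes T u 0"
  using EWtab_top_row[of u] unfolding precedes_def by (cases u) (auto simp: cell_iff)

lemma ex_precedes:
  assumes v: "v \<in> {1..n}" shows "\<exists>u. precedes T u v"
proof (cases "v \<in> R")
  case True
  thus ?thesis using EWtab_row_has_0 v unfolding precedes_def by fastforce
next
  case False
  hence "cell n R 0 v" using zero_in_R v by (auto simp: cell_iff)
  thus ?thesis using EWtab_top_row unfolding precedes_def by blast
qed

lemma stable_phiTC: "stable n R (phiTC n R T)"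
  unfolding stable_def
proof
  fix v assume v: "v \<in> {1..n}"
  obtain u where u: "precedes T u v" using ex_precedes[OF v] by blast
  have "{w. precedes T v w} \<subset> nbhd v"
    using u precedes_asym mem_nbhd_iff_precedes by blast
  hence "card {w. precedes T v w} < card (nbhd v)" by (intro psubset_card_mono) auto
  thus "phiTC n R T v < deg n R v" using phiTC_eq_card_succ[OF v] by (simp add: deg_eq_card_nbhd)
qed

lemma config_phiTC: "config n (phiTC n R T)"
  by (simp add: config_def phiTC_def)

text \<open>Let i be the smallest row of W, Z the columns of W with a 0 in row i, and Q the set of Z
  together with the rows of W other than i having a 1 in a column of Z. By the rectangle
  condition, every vertex of Q has a predecessor in Q.\<close>
lemma EWtab_precedes_closed_shrink:
  assumes W: "W \<subseteq> {1..n}" "W \<noteq> {}" and closed: "\<forall>v\<in>W. \<exists>u\<in>W. precedes T u v"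
  shows "\<exists>Q\<subset>W. Q \<noteq> {} \<and> (\<forall>v\<in>Q. \<exists>u\<in>Q. precedes T u v)"
proof -
  have finW: "finite W" using W(1) finite_subset by blast
  have "W \<inter> R \<noteq> {}"
  proof -
    obtain v where v: "v \<in> W" using W(2) by blast
    obtain u where "u \<in> W" "precedes T u v" using closed v by blast
    thus ?thesis using v unfolding precedes_def cell_iff by blast
  qed
  define i where "i = Min (W \<inter> R)"
  have iW: "i \<in> W" "i \<in> R" using Min_in[of "W \<inter> R"] \<open>W \<inter> R \<noteq> {}\<close> finW by (simp_all add: i_def)
  have i_min: "i \<le> r" if "r \<in> W" "r \<in> R" for r
    using Min_le[of "W \<inter> R" r] finW that by (simp add: i_def)
  define Z where "Z = {c \<in> W. cell n R i c \<and> \<not> T i c}"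
  define Q where "Q = Z \<union> {r \<in> W. r \<in> R \<and> r \<noteq> i \<and> (\<exists>c\<in>Z. cell n R r c \<and> T r c)}"
  have "Q \<subseteq> W - {i}" by (auto simp: Q_def Z_def cell_iff)
  hence psub: "Q \<subset> W" using iW(1) by blast
  obtain u where u: "u \<in> W" "precedes T u i" using closed iW(1) by blast
  hence "u \<in> Z" using iW(2) unfolding Z_def precedes_def cell_iff by auto
  hence "Q \<noteq> {}" by (auto simp: Q_def)
  moreover have "\<exists>u\<in>Q. precedes T u v" if vQ: "v \<in> Q" for v
  proof (cases "v \<in> Z")
    case True
    then obtain r where r: "r \<in> W" "precedes T r v" using closed by (auto simp: Z_def)
    have "v \<notin> R" "\<not> T i v" using True by (auto simp: Z_def cell_iff)
    hence "cell n R r v" "T r v" "r \<noteq> i" using r(2) unfolding precedes_def cell_iff by auto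
    hence "r \<in> Q" using r(1) True by (auto simp: Q_def cell_iff)
    thus ?thesis using r(2) by blast
  next
    case False
    then obtain c where v: "v \<in> W" "v \<in> R" "v \<noteq> i" and c: "c \<in> Z" "cell n R v c" "T v c"
      using vQ by (auto simp: Q_def)
    obtain c' where c': "c' \<in> W" "precedes T c' v" using closed v(1) by blast
    have cell': "cell n R v c'" "\<not> T v c'" using c'(2) v(2) unfolding precedes_def cell_iff by auto
    have "i < v" using i_min[OF v(1,2)] v(3) by simp
    hence ic': "cell n R i c'" using cell'(1) iW(2) by (auto simp: cell_iff)
    have "cell n R i c" "\<not> T i c" using c(1) by (auto simp: Z_def)
    hence "\<not> T i c'" using EWtab_rectangle[OF \<open>i < v\<close>] ic' c(2,3) cell' by blast
    hence "c' \<in> Q" using c'(1) ic' by (auto simp: Q_def Z_def)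
    thus ?thesis using c'(2) by blast
  qed
  ultimately show ?thesis using psub by blast
qed

lemma EWtab_no_cycle:
  "W \<subseteq> {1..n} \<Longrightarrow> \<forall>v\<in>W. \<exists>u\<in>W. precedes T u v \<Longrightarrow> W = {}"
proof (induction "card W" arbitrary: W rule: less_induct)
  case less
  show ?case
  proof (rule ccontr)
    assume "W \<noteq> {}"
    then obtain Q where Q: "Q \<subset> W" "Q \<noteq> {}" "\<forall>v\<in>Q. \<exists>u\<in>Q. precedes T u v"
      using EWtab_precedes_closed_shrink[OF less.prems(1) _ less.prems(2)] by blast
    have "finite W" using less.prems(1) by (rule finite_subset) simp
    hence "card Q < card W" using Q(1) by (rule psubset_card_mono)
    moreover have "Q \<subseteq> {1..n}" using Q(1) less.prems(1) by blast
    ultimately have "Q = {}" using Q(3) by (rule less.hyps)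
    thus False using Q(2) by blast
  qed
qed

abbreviation "cT \<equiv> phiTC n R T"

lemma precedes_toppled_before:
  "v \<in> phase_set cT p \<Longrightarrow> precedes T u v \<Longrightarrow> u \<in> toppled_before cT p"
proof (induction p arbitrary: u v rule: less_induct)
  case (less p)
  show ?case
  proof (cases p)
    case 0 thus ?thesis using less.prems not_precedes_0 by (simp add: phase_set_0)
  next
    case (Suc k)
    let ?B = "toppled_before cT (Suc k)"
    have v: "v \<in> {1..n}" "v \<notin> ?B" "card (nbhd v - ?B) \<le> cT v"
      using phase_set_Suc_iff[OF stable_phiTC] less.prems(1) Suc by auto
    have "precedes T w v" if w: "w \<in> nbhd v" "w \<in> ?B" for w
    proof (rule ccontr)
      assume "\<not> precedes T w v"
      hence "precedes T v w" using w mem_nbhd_iff_precedes by blast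
      obtain q where "q < Suc k" "w \<in> phase_set cT q" using w(2) by (auto simp: toppled_before_def)
      hence "v \<in> toppled_before cT q" using less.IH \<open>precedes T v w\<close> Suc by auto
      thus False using v(2) toppled_before_mono[of q "Suc k"] \<open>q < Suc k\<close> by auto
    qed
    hence "{w. precedes T v w} \<subseteq> nbhd v - ?B" using precedes_asym mem_nbhd_iff_precedes by blast
    moreover have "card (nbhd v - ?B) \<le> card {w. precedes T v w}" using v phiTC_eq_card_succ by simp
    ultimately have "{w. precedes T v w} = nbhd v - ?B" by (intro card_seteq) auto
    thus ?thesis using less.prems(2) precedes_asym mem_nbhd_iff_precedes Suc by blast
  qed
qed

lemma burns_phiTC: "burns cT"
proof -
  define W where "W = {v \<in> {0..n}. \<forall>p. v \<notin> phase_set cT p}"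
  have W: "W \<subseteq> {1..n}" using phase_set_0[of cT] by (fastforce simp: W_def)
  have "\<exists>u\<in>W. precedes T u v" if vW: "v \<in> W" for v
  proof (rule ccontr)
    assume none: "\<not> (\<exists>u\<in>W. precedes T u v)"
    have v: "v \<in> {1..n}" using vW W by blast
    have "\<forall>u\<in>{u. precedes T u v}. \<exists>p. u \<in> phase_set cT p"
      using none nbhd_subset[of v] mem_nbhd_iff_precedes by (fastforce simp: W_def)
    moreover have "finite {u. precedes T u v}"
      using mem_nbhd_iff_precedes by (intro finite_subset[OF _ finite_nbhd[of v]]) blast
    ultimately obtain K where "{u. precedes T u v} \<subseteq> toppled_before cT K"
      using finite_subset_toppled_before by blast
    moreover obtain k where k: "k \<ge> K" "v \<in> phase_class k" using ex_phase_class_ge[of v K] v by auto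
    ultimately have "{u. precedes T u v} \<subseteq> toppled_before cT (Suc k)"
      using toppled_before_mono[of K "Suc k" cT] by auto
    hence "nbhd v - toppled_before cT (Suc k) \<subseteq> {u. precedes T v u}"
      using mem_nbhd_iff_precedes by blast
    moreover have "finite {u. precedes T v u}"
      using mem_nbhd_iff_precedes by (intro finite_subset[OF _ finite_nbhd[of v]]) blast
    ultimately have "card (nbhd v - toppled_before cT (Suc k)) \<le> card {u. precedes T v u}"
      by (simp add: card_mono)
    hence "card (nbhd v - toppled_before cT (Suc k)) \<le> cT v" using phiTC_eq_card_succ[OF v] by simp
    moreover have "v \<notin> toppled_before cT (Suc k)" using vW by (auto simp: W_def toppled_before_def)
    ultimately have "v \<in> phase_set cT (Suc k)" using phase_set_Suc_iff[OF stable_phiTC] v k by blast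
    thus False using vW by (auto simp: W_def)
  qed
  hence "W = {}" using EWtab_no_cycle W by blast
  thus ?thesis unfolding burns_def W_def by blast
qed

lemma precedes_burn_time:
  assumes uv: "precedes T u v" shows "burn_time cT u < burn_time cT v"
proof -
  have "u \<in> nbhd v" "v \<in> nbhd u" using uv mem_nbhd_iff_precedes by blast+
  hence u: "u \<le> n" and v: "v \<le> n" using nbhd_subset[of v] nbhd_subset[of u] by auto
  have "u \<in> toppled_before cT (burn_time cT v)"
    using precedes_toppled_before[OF phase_set_burn_time[OF stable_phiTC burns_phiTC v] uv] .
  thus ?thesis using mem_toppled_before_iff[OF stable_phiTC burns_phiTC u] by blast
qed

lemma EWtab_iff_burn_time:
  assumes "cell n R i j" shows "T i j \<longleftrightarrow> burn_time cT i < burn_time cT j"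
proof
  assume "T i j" thus "burn_time cT i < burn_time cT j"
    using assms precedes_burn_time unfolding precedes_def by blast
next
  assume "burn_time cT i < burn_time cT j"
  hence "\<not> precedes T j i" using precedes_burn_time[of j i] by auto
  thus "T i j" using assms unfolding precedes_def by blast
qed

lemma phiTC_eq_later_degree:
  assumes v: "v \<in> {1..n}" shows "cT v = later_degree (burn_time cT) v"
proof -
  have "precedes T v u \<longleftrightarrow> u \<in> nbhd v \<and> burn_time cT v < burn_time cT u" for u
    using precedes_burn_time[of v u] precedes_burn_time[of u v] mem_nbhd_iff_precedes[of u v T]
      by auto
  hence "{u. precedes T v u} = {u \<in> nbhd v. burn_time cT v < burn_time cT u}" by blast
  thus ?thesis using phiTC_eq_card_succ[OF v] by (simp add: later_degree_def)
qed

end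

lemma inj_on_phiTC: "inj_on (phiTC n R) (EWtab n R)"
proof (rule inj_onI)
  fix T1 T2 assume T: "T1 \<in> EWtab n R" "T2 \<in> EWtab n R" and eq: "phiTC n R T1 = phiTC n R T2"
  have "T1 i j = T2 i j" for i j
  proof (cases "cell n R i j")
    case True
    thus ?thesis using EWtab_iff_burn_time[OF T(1) True] EWtab_iff_burn_time[OF T(2) True]
      eq by simp
  next
    case False
    thus ?thesis using EWtab_cell[OF T(1)] EWtab_cell[OF T(2)] by blast
  qed
  thus "T1 = T2" by blast
qed

lemma phiCT_phiTC: "T \<in> EWtab n R \<Longrightarrow> phiCT n R (phiTC n R T) = T"
  unfolding phiCT_def by (rule the_inv_into_f_f[OF inj_on_phiTC])

definition tableau_of_times :: "(nat \<Rightarrow> nat) \<Rightarrow> nat \<Rightarrow> nat \<Rightarrow> bool" where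
  "tableau_of_times t i j \<longleftrightarrow> cell n R i j \<and> t i < t j"

lemma Ublk_eq_phase_set: "Ublk n R c i = phase_set c (2 * i)"
  by (simp add: Ublk_def phase_set_def)

lemma Vblk_eq_phase_set: "Vblk n R c i = (if i = 0 then {} else phase_set c (2 * i - 1))"
  by (simp add: Vblk_def phase_set_def)

context
  fixes x assumes st: "stable n R x" and bu: "burns x"
begin

lemma Ublk_iff: "v \<in> Ublk n R x i \<longleftrightarrow> v \<le> n \<and> burn_time x v = 2 * i"
  by (simp add: Ublk_eq_phase_set mem_phase_set_iff[OF st bu])

lemma Vblk_iff: "v \<in> Vblk n R x i \<longleftrightarrow> i \<noteq> 0 \<and> v \<le> n \<and> burn_time x v = 2 * i - 1"
  by (simp add: Vblk_eq_phase_set mem_phase_set_iff[OF st bu])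

lemma cell_burn_time_neq: "cell n R i j \<Longrightarrow> burn_time x i \<noteq> burn_time x j"
  using burn_time_nbhd_neq[OF st bu] by (simp add: mem_nbhd_iff adj_def)

lemma tableau_of_times_EWtab: "tableau_of_times (burn_time x) \<in> EWtab n R"
proof -
  let ?T = "tableau_of_times (burn_time x)"
  have "?T 0 j" if "cell n R 0 j" for j
    using that burn_time_eq_0_iff[OF st bu, of j] burn_time_eq_0_iff[OF st bu, of 0]
    by (auto simp: tableau_of_times_def cell_iff)
  moreover have "\<exists>j. cell n R i j \<and> \<not> ?T i j" if i: "i \<in> R" "i \<noteq> 0" for i
  proof -
    have "i \<in> {1..n}" using i R_subset by auto
    then obtain u where "u \<in> nbhd i" "Suc (burn_time x u) = burn_time x i"
      using ex_prev_nbr[OF st bu] by blast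
    thus ?thesis using nbhd_row[OF i(1)] by (auto simp: tableau_of_times_def)
  qed
  moreover have "\<not> (\<not> ?T i j \<and> \<not> ?T i' j' \<and> ?T i j' \<and> ?T i' j) \<and>
      \<not> (\<not> ?T i j' \<and> \<not> ?T i' j \<and> ?T i j \<and> ?T i' j')"
    if "cell n R i j" "cell n R i j'" "cell n R i' j" "cell n R i' j'" for i i' j j'
    using that cell_burn_time_neq unfolding tableau_of_times_def by fastforce
  ultimately show ?thesis unfolding EWtab_def by (auto simp: tableau_of_times_def)
qed

lemma phiTC_tableau_of_times:
  assumes v: "v \<in> {1..n}"
  shows "phiTC n R (tableau_of_times (burn_time x)) v = later_degree (burn_time x) v"
proof (cases "v \<in> R")
  case True
  have "{j. cell n R v j \<and> tableau_of_times (burn_time x) v j}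
      = {u \<in> nbhd v. burn_time x v < burn_time x u}"
    using nbhd_row[OF True] by (auto simp: tableau_of_times_def)
  thus ?thesis using True v by (simp add: phiTC_def later_degree_def)
next
  case False
  have "{k. cell n R k v \<and> \<not> tableau_of_times (burn_time x) k v}
      = {u \<in> nbhd v. burn_time x v < burn_time x u}"
    using nbhd_col[OF False] cell_burn_time_neq by (fastforce simp: tableau_of_times_def)
  thus ?thesis using False v by (simp add: phiTC_def later_degree_def)
qed

lemma mem_Ublk_half_burn_time: "v \<le> n \<Longrightarrow> even (burn_time x v) \<Longrightarrow> v \<in> Ublk n R x (burn_time x v div 2)"
  by (simp add: Ublk_iff)

lemma mem_Vblk_half_burn_time:
  "v \<le> n \<Longrightarrow> odd (burn_time x v) \<Longrightarrow> v \<in> Vblk n R x ((burn_time x v + 1) div 2)"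
  by (auto simp: Vblk_iff elim!: oddE)

lemma minrec_row_set:
  assumes j: "j \<le> n" "even (burn_time x j)"
  shows "{l. \<exists>i k. j \<in> Ublk n R x i \<and> k > i \<and> l \<in> Vblk n R x k \<and> j < l}
    = {u \<in> nbhd j. burn_time x j < burn_time x u}"
proof -
  let ?t = "burn_time x"
  have "(\<exists>i k. j \<in> Ublk n R x i \<and> k > i \<and> l \<in> Vblk n R x k \<and> j < l)
      \<longleftrightarrow> l \<le> n \<and> odd (?t l) \<and> ?t j < ?t l \<and> j < l" for l
  proof
    assume "l \<le> n \<and> odd (?t l) \<and> ?t j < ?t l \<and> j < l"
    moreover have "?t j div 2 < (?t l + 1) div 2" if "?t j < ?t l" "odd (?t l)"
      using that j by (auto elim!: oddE evenE)
    ultimately show "\<exists>i k. j \<in> Ublk n R x i \<and> k > i \<and> l \<in> Vblk n R x k \<and> j < l"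
      using mem_Ublk_half_burn_time[OF j] mem_Vblk_half_burn_time by blast
  qed (auto simp: Ublk_iff Vblk_iff)
  thus ?thesis using j odd_burn_time_iff[OF st bu] nbhd_row[of j] by (auto simp: cell_iff)
qed

lemma minrec_col_set:
  assumes j: "j \<le> n" "odd (burn_time x j)"
  shows "{l. \<exists>i k. j \<in> Vblk n R x i \<and> k \<ge> i \<and> l \<in> Ublk n R x k \<and> j > l}
    = {u \<in> nbhd j. burn_time x j < burn_time x u}"
proof -
  let ?t = "burn_time x"
  have "(\<exists>i k. j \<in> Vblk n R x i \<and> k \<ge> i \<and> l \<in> Ublk n R x k \<and> j > l)
      \<longleftrightarrow> l \<le> n \<and> even (?t l) \<and> ?t j < ?t l \<and> l < j" for l
  proof
    assume "l \<le> n \<and> even (?t l) \<and> ?t j < ?t l \<and> l < j"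
    moreover have "(?t j + 1) div 2 \<le> ?t l div 2" if "?t j < ?t l" "even (?t l)"
      using that j by (auto elim!: oddE evenE)
    ultimately show "\<exists>i k. j \<in> Vblk n R x i \<and> k \<ge> i \<and> l \<in> Ublk n R x k \<and> j > l"
      using mem_Vblk_half_burn_time[OF j] mem_Ublk_half_burn_time by blast
  qed (auto simp: Ublk_iff Vblk_iff)
  thus ?thesis using j odd_burn_time_iff[OF st bu] nbhd_col[of j] by (auto simp: cell_iff)
qed

lemma minrec_eq_later_degree:
  assumes j: "j \<in> {1..n}"
  shows "minrec n R x j = later_degree (burn_time x) j"
proof -
  have "(\<exists>i. j \<in> Ublk n R x i) \<longleftrightarrow> even (burn_time x j)"
    using j mem_Ublk_half_burn_time by (auto simp: Ublk_iff)
  thus ?thesis using j minrec_row_set minrec_col_set by (simp add: minrec_def later_degree_def)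
qed

end

subsection \<open>The toppling word and its run decomposition\<close>

definition toppling_word :: "(nat \<Rightarrow> nat) \<Rightarrow> nat list" where
  "toppling_word c = concat (map (\<lambda>i. sorted_list_of_set (Vblk n R c i)
                                     @ rev (sorted_list_of_set (Ublk n R c i))) [1..<n+1])"

lemma Psi_eq_toppling_word: "Psi n R T = toppling_word (phiTC n R T)"
  by (simp add: Psi_def toppling_word_def)

text \<open>Psi lists each V-block (odd times) increasingly and each U-block (even times)
  decreasingly.\<close>
definition word_order :: "(nat \<Rightarrow> nat) \<Rightarrow> nat \<Rightarrow> nat \<Rightarrow> bool" where
  "word_order t u v \<longleftrightarrow> t u < t v \<or> (t u = t v \<and> (if odd (t u) then u < v else v < u))"

lemma finite_Vblk: "finite (Vblk n R c i)"
  by (simp add: Vblk_eq_phase_set finite_phase_set)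

lemma finite_Ublk: "finite (Ublk n R c i)"
  by (simp add: Ublk_eq_phase_set finite_phase_set)

context
  fixes c assumes st: "stable n R c" and bu: "burns c"
begin

abbreviation \<pi> :: "nat list" where "\<pi> \<equiv> toppling_word c"

lemma burn_time_attained: "v \<le> n \<Longrightarrow> s \<le> burn_time c v \<Longrightarrow> \<exists>w\<le>n. burn_time c w = s"
proof (induction "burn_time c v - s" arbitrary: v)
  case 0 thus ?case by auto
next
  case (Suc d)
  hence "v \<in> {1..n}" using burn_time_eq_0_iff[OF st bu] by fastforce
  then obtain u where u: "u \<in> nbhd v" "Suc (burn_time c u) = burn_time c v"
    using ex_prev_nbr[OF st bu] by blast
  moreover have "u \<le> n" using u nbhd_subset by force
  moreover have "d = burn_time c u - s" "s \<le> burn_time c u" using Suc u by auto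
  ultimately show ?case using Suc.hyps(1) by blast
qed

lemma burn_time_le_n: assumes v: "v \<le> n" shows "burn_time c v \<le> n"
proof -
  have "{0..burn_time c v} \<subseteq> burn_time c ` {0..n}" using burn_time_attained[OF v] by force
  hence "card {0..burn_time c v} \<le> card (burn_time c ` {0..n})" by (intro card_mono) auto
  also have "\<dots> \<le> card {0..n}" by (rule card_image_le) simp
  finally show ?thesis by simp
qed

lemma set_toppling_word: "set \<pi> = {1..n}"
proof -
  have blocks: "(\<exists>i\<in>{1..n}. v \<in> Vblk n R c i \<or> v \<in> Ublk n R c i) \<longleftrightarrow> v \<in> {1..n}" for v
  proof
    let ?i = "(burn_time c v + 1) div 2"
    assume v: "v \<in> {1..n}"
    hence "1 \<le> burn_time c v" "burn_time c v \<le> n"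
      using burn_time_pos[OF st bu] burn_time_le_n by auto
    hence "?i \<in> {1..n}" by (simp only: atLeastAtMost_iff) presburger
    moreover have "v \<in> Vblk n R c ?i \<or> v \<in> Ublk n R c ?i"
    proof (cases "odd (burn_time c v)")
      case True
      hence "burn_time c v = 2 * ?i - 1" by (auto elim!: oddE)
      thus ?thesis using v \<open>?i \<in> {1..n}\<close> by (simp add: Vblk_iff[OF st bu])
    next
      case False
      hence "burn_time c v = 2 * ?i" by (auto elim!: evenE)
      thus ?thesis using v by (simp add: Ublk_iff[OF st bu])
    qed
    ultimately show "\<exists>i\<in>{1..n}. v \<in> Vblk n R c i \<or> v \<in> Ublk n R c i" by blast
  next
    assume "\<exists>i\<in>{1..n}. v \<in> Vblk n R c i \<or> v \<in> Ublk n R c i"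
    hence "v \<le> n" "burn_time c v \<noteq> 0" by (auto simp: Vblk_iff[OF st bu] Ublk_iff[OF st bu])
    thus "v \<in> {1..n}" using burn_time_eq_0_iff[OF st bu] by (cases "v = 0") auto
  qed
  have "set \<pi> = (\<Union>i\<in>{1..n}. Vblk n R c i \<union> Ublk n R c i)"
    by (simp add: toppling_word_def finite_Vblk finite_Ublk atLeastLessThanSuc_atLeastAtMost
      del: upt_Suc)
  thus ?thesis using blocks by blast
qed

lemma sorted_toppling_word: "sorted_wrt (word_order (burn_time c)) \<pi>"
  unfolding toppling_word_def
proof (rule sorted_wrt_concat_map)
  fix i
  have "sorted_wrt (word_order (burn_time c)) (sorted_list_of_set (Vblk n R c i))"
    using Vblk_iff[OF st bu] finite_Vblk
    by (intro sorted_wrt_mono_rel[OF _ strict_sorted_list_of_set]) (auto simp: word_order_def)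
  moreover have "sorted_wrt (word_order (burn_time c)) (rev (sorted_list_of_set (Ublk n R c i)))"
    unfolding sorted_wrt_rev using Ublk_iff[OF st bu] finite_Ublk
    by (intro sorted_wrt_mono_rel[OF _ strict_sorted_list_of_set]) (auto simp: word_order_def)
  ultimately show "sorted_wrt (word_order (burn_time c))
      (sorted_list_of_set (Vblk n R c i) @ rev (sorted_list_of_set (Ublk n R c i)))"
    using Vblk_iff[OF st bu] Ublk_iff[OF st bu] finite_Vblk finite_Ublk
    by (auto simp: sorted_wrt_append word_order_def)
next
  fix i j a b assume "i < j"
    and "a \<in> set (sorted_list_of_set (Vblk n R c i) @ rev (sorted_list_of_set (Ublk n R c i)))"
    and "b \<in> set (sorted_list_of_set (Vblk n R c j) @ rev (sorted_list_of_set (Ublk n R c j)))"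
  hence "burn_time c a < burn_time c b"
    using Vblk_iff[OF st bu] Ublk_iff[OF st bu] finite_Vblk finite_Ublk by auto
  thus "word_order (burn_time c) a b" by (simp add: word_order_def)
qed (rule sorted_wrt_upt)

lemma distinct_toppling_word: "distinct \<pi>"
proof -
  have "\<pi> ! i \<noteq> \<pi> ! j" if "i < j" "j < length \<pi>" for i j
    using sorted_wrt_nth_less[OF sorted_toppling_word that]
      by (auto simp: word_order_def split: if_splits)
  thus ?thesis unfolding distinct_conv_nth by (metis linorder_neqE_nat)
qed

lemma length_toppling_word: "length \<pi> = n"
  using distinct_card[OF distinct_toppling_word] set_toppling_word by simp

lemma is_perm_toppling_word: "is_perm n \<pi>"
  using distinct_toppling_word set_toppling_word by (simp add: is_perm_def)

lemma nth_toppling_word: "p < n \<Longrightarrow> \<pi> ! p \<in> {1..n}"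
  using nth_mem[of p \<pi>] length_toppling_word set_toppling_word by simp

lemma ex_nth_toppling_word: "v \<in> {1..n} \<Longrightarrow> \<exists>m<n. \<pi> ! m = v"
  using set_toppling_word length_toppling_word by (metis in_set_conv_nth)

lemma word_order_nth: "r < q \<Longrightarrow> q < n \<Longrightarrow> word_order (burn_time c) (\<pi> ! r) (\<pi> ! q)"
  using sorted_wrt_nth_less[OF sorted_toppling_word] length_toppling_word by simp

lemma burn_time_nth_mono: "r \<le> q \<Longrightarrow> q < n \<Longrightarrow> burn_time c (\<pi> ! r) \<le> burn_time c (\<pi> ! q)"
  using word_order_nth[of r q] by (cases "r = q") (auto simp: word_order_def)

lemma burn_time_nth_0: "burn_time c (\<pi> ! 0) = 1"
proof -
  have "1 \<le> burn_time c n" using burn_time_pos[OF st bu] n_ge_1 by simp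
  then obtain w where w: "w \<le> n" "burn_time c w = 1" using burn_time_attained[of n 1] by blast
  hence "w \<in> {1..n}" using burn_time_eq_0_iff[OF st bu] by fastforce
  then obtain m where "m < n" "\<pi> ! m = w" using ex_nth_toppling_word by blast
  hence "burn_time c (\<pi> ! 0) \<le> 1" using burn_time_nth_mono[of 0 m] w by simp
  moreover have "1 \<le> burn_time c (\<pi> ! 0)"
    using burn_time_pos[OF st bu] nth_toppling_word n_ge_1 by simp
  ultimately show ?thesis by simp
qed

lemma burn_time_nth_Suc:
  assumes q: "Suc q < n"
  shows "burn_time c (\<pi> ! Suc q) \<le> Suc (burn_time c (\<pi> ! q))"
proof (rule ccontr)
  assume gt: "\<not> ?thesis"
  have "\<pi> ! Suc q \<le> n" using nth_toppling_word[OF q] by simp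
  then obtain w where w: "w \<le> n" "burn_time c w = Suc (burn_time c (\<pi> ! q))"
    using burn_time_attained gt by (meson nat_le_linear order_trans)
  hence "w \<in> {1..n}" using burn_time_eq_0_iff[OF st bu] by fastforce
  then obtain m where m: "m < n" "\<pi> ! m = w" using ex_nth_toppling_word by blast
  show False
  proof (cases "m \<le> q")
    case True thus False using burn_time_nth_mono[of m q] q m w by simp
  next
    case False thus False using burn_time_nth_mono[of "Suc q" m] m w gt by simp
  qed
qed

text \<open>This decides whether the letter following a is an ascent top.\<close>
lemma ex_prev_nbr_nth:
  assumes q: "Suc q < n" and up: "burn_time c (\<pi> ! Suc q) = Suc (burn_time c (\<pi> ! q))"
  shows "\<exists>u\<in>nbhd (\<pi> ! Suc q). burn_time c u = burn_time c (\<pi> ! q) \<and>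
           (if odd (burn_time c (\<pi> ! q)) then u \<le> \<pi> ! q else \<pi> ! q \<le> u)"
proof -
  let ?a = "\<pi> ! q" and ?b = "\<pi> ! Suc q"
  obtain u where u: "u \<in> nbhd ?b" "Suc (burn_time c u) = burn_time c ?b"
    using ex_prev_nbr[OF st bu] nth_toppling_word[OF q] by blast
  have tu: "burn_time c u = burn_time c ?a" using u up by simp
  have "u \<le> n" using u nbhd_subset by force
  moreover have "1 \<le> burn_time c ?a" using burn_time_pos[OF st bu] nth_toppling_word q by simp
  ultimately have "u \<in> {1..n}" using tu burn_time_eq_0_iff[OF st bu] by fastforce
  then obtain m where m: "m < n" "\<pi> ! m = u" using ex_nth_toppling_word by blast
  have "m \<le> q"
    using burn_time_nth_mono[of "Suc q" m] m tu up by (metis Suc_n_not_le_n not_less_eq_eq)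
  hence "u = ?a \<or> word_order (burn_time c) u ?a" using word_order_nth[of m q] m q by force
  thus ?thesis using u tu by (auto simp: word_order_def)
qed

lemma asc_pos_iff_odd_burn_time:
  assumes p: "p < n" shows "asc_pos \<pi> p \<longleftrightarrow> odd (burn_time c (\<pi> ! p))"
proof (cases p)
  case 0 thus ?thesis using burn_time_nth_0 by (simp add: asc_pos_def)
next
  case (Suc q)
  let ?a = "\<pi> ! q" and ?b = "\<pi> ! Suc q"
  have q: "Suc q < n" using p Suc by simp
  have asc: "asc_pos \<pi> p \<longleftrightarrow> ?a < ?b" using Suc by (simp add: asc_pos_def)
  have "?b \<le> n" using nth_toppling_word[OF q] by simp
  consider "burn_time c ?b = burn_time c ?a" | "burn_time c ?b = Suc (burn_time c ?a)"
    using burn_time_nth_mono[of q "Suc q"] burn_time_nth_Suc[OF q] q by fastforce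
  thus ?thesis
  proof cases
    case 1
    thus ?thesis using word_order_nth[of q "Suc q"] q asc Suc by (auto simp: word_order_def)
  next
    case 2
    then obtain u where u: "u \<in> nbhd ?b" "burn_time c u = burn_time c ?a"
      and order: "if odd (burn_time c ?a) then u \<le> ?a else ?a \<le> u"
      using ex_prev_nbr_nth[OF q] by blast
    have "odd (burn_time c ?a) \<longleftrightarrow> ?b \<in> R" using odd_burn_time_iff[OF st bu \<open>?b \<le> n\<close>] 2 by simp
    thus ?thesis using u(1) order asc 2 Suc nbhd_row[of ?b] nbhd_col[of ?b]
      by (cases "odd (burn_time c ?a)") (auto simp: cell_iff)
  qed
qed

lemma run_no_eq_burn_time: "p < n \<Longrightarrow> run_no \<pi> p = burn_time c (\<pi> ! p)"
proof (induction p)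
  case 0 thus ?case using burn_time_nth_0 by (simp add: run_no_def)
next
  case (Suc p)
  define A where "A p = {q. 1 \<le> q \<and> q \<le> p \<and> asc_pos \<pi> q \<noteq> asc_pos \<pi> (q - 1)}" for p
  have fin: "finite (A p)" by (rule finite_subset[of _ "{..p}"]) (auto simp: A_def)
  have IH: "run_no \<pi> p = burn_time c (\<pi> ! p)" using Suc by simp
  have le: "burn_time c (\<pi> ! p) \<le> burn_time c (\<pi> ! Suc p)"
    "burn_time c (\<pi> ! Suc p) \<le> Suc (burn_time c (\<pi> ! p))"
    using burn_time_nth_mono[of p "Suc p"] burn_time_nth_Suc Suc.prems by auto
  hence step: "burn_time c (\<pi> ! Suc p) = burn_time c (\<pi> ! p)
      \<or> burn_time c (\<pi> ! Suc p) = Suc (burn_time c (\<pi> ! p))" by linarith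
  hence switch: "asc_pos \<pi> (Suc p) \<noteq> asc_pos \<pi> p
      \<longleftrightarrow> burn_time c (\<pi> ! Suc p) = Suc (burn_time c (\<pi> ! p))"
    using asc_pos_iff_odd_burn_time[of p] asc_pos_iff_odd_burn_time[of "Suc p"] Suc.prems by auto
  show ?case
  proof (cases "asc_pos \<pi> (Suc p) \<noteq> asc_pos \<pi> p")
    case True
    hence "A (Suc p) = insert (Suc p) (A p)" by (auto simp: A_def)
    hence "card (A (Suc p)) = Suc (card (A p))" using fin by (simp add: A_def)
    thus ?thesis using IH True switch unfolding run_no_def A_def by simp
  next
    case False
    hence "A (Suc p) = A p" by (auto simp: A_def le_Suc_eq)
    thus ?thesis using IH False switch step unfolding run_no_def A_def by auto
  qed
qed

lemma Ablk_toppling_word: "Ablk \<pi> l = {v \<in> {0..n}. burn_time c v + 1 = 2 * l}"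
proof -
  have "{\<pi> ! p | p. p < length \<pi> \<and> asc_pos \<pi> p \<and> run_no \<pi> p = 2 * l - 1}
      = {\<pi> ! p | p. p < length \<pi> \<and> odd (burn_time c (\<pi> ! p)) \<and> burn_time c (\<pi> ! p) = 2 * l - 1}"
    using asc_pos_iff_odd_burn_time run_no_eq_burn_time length_toppling_word by metis
  also have "\<dots> = {v \<in> {1..n}. odd (burn_time c v) \<and> burn_time c v = 2 * l - 1}"
    using nth_Collect_eq_set_filter[of \<pi> "\<lambda>v. odd (burn_time c v) \<and> burn_time c v = 2 * l - 1"]
    by (simp add: set_toppling_word)
  also have "\<dots> = {v \<in> {0..n}. burn_time c v + 1 = 2 * l}" if "l \<noteq> 0"
  proof -
    have "v \<in> {1..n} \<and> odd (burn_time c v) \<and> burn_time c v = 2 * l - 1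
        \<longleftrightarrow> v \<le> n \<and> burn_time c v + 1 = 2 * l" for v
    proof (cases "v = 0")
      case True thus ?thesis using burn_time_eq_0_iff[OF st bu, of 0] by simp
    next
      case False
      have "odd t \<and> t = 2 * l - 1 \<longleftrightarrow> t + 1 = 2 * l" for t :: nat
        using that by presburger
      hence "odd (burn_time c v) \<and> burn_time c v = 2 * l - 1 \<longleftrightarrow> burn_time c v + 1 = 2 * l" .
      thus ?thesis using False by auto
    qed
    thus ?thesis by auto
  qed
  finally show ?thesis by (auto simp: Ablk_def)
qed

lemma Dblk_toppling_word: "Dblk \<pi> l = {v \<in> {0..n}. burn_time c v = 2 * l}"
proof -
  have "{\<pi> ! p | p. p < length \<pi> \<and> \<not> asc_pos \<pi> p \<and> run_no \<pi> p = 2 * l}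
      = {\<pi> ! p | p. p < length \<pi> \<and> even (burn_time c (\<pi> ! p)) \<and> burn_time c (\<pi> ! p) = 2 * l}"
    using asc_pos_iff_odd_burn_time run_no_eq_burn_time length_toppling_word by metis
  also have "\<dots> = {v \<in> {1..n}. even (burn_time c v) \<and> burn_time c v = 2 * l}"
    using nth_Collect_eq_set_filter[of \<pi> "\<lambda>v. even (burn_time c v) \<and> burn_time c v = 2 * l"]
    by (simp add: set_toppling_word)
  also have "\<dots> = {v \<in> {0..n}. burn_time c v = 2 * l}" if "l \<noteq> 0"
  proof -
    have "v \<in> {1..n} \<and> even (burn_time c v) \<and> burn_time c v = 2 * l
        \<longleftrightarrow> v \<le> n \<and> burn_time c v = 2 * l" for v
      using burn_time_eq_0_iff[OF st bu, of v] that by (cases "v = 0") auto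
    thus ?thesis by auto
  qed
  finally show ?thesis using burn_time_eq_0_iff[OF st bu] by (auto simp: Dblk_def)
qed

end

context
  fixes c assumes st: "stable n R c" and bu: "burns c"
begin

lemma prev_degree_row:
  assumes i: "i \<in> {1..n}" and ti: "burn_time c i = 2 * l"
  shows "prev_degree (burn_time c) i = card {j \<in> Ablk (toppling_word c) l. i < j}"
proof -
  have iR: "i \<in> R" using odd_burn_time_iff[OF st bu, of i] i ti by simp
  have "u \<in> nbhd i \<and> Suc (burn_time c u) = burn_time c i
      \<longleftrightarrow> u \<in> Ablk (toppling_word c) l \<and> i < u" for u
  proof
    assume "u \<in> Ablk (toppling_word c) l \<and> i < u"
    hence u: "u \<le> n" "burn_time c u + 1 = 2 * l" "i < u"
      by (auto simp: Ablk_toppling_word[OF st bu])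
    have "odd t" if "t + 1 = 2 * l" for t :: nat using that by presburger
    hence "u \<notin> R" using odd_burn_time_iff[OF st bu u(1)] u(2) by simp
    hence "cell n R i u" using u iR by (simp add: cell_iff)
    thus "u \<in> nbhd i \<and> Suc (burn_time c u) = burn_time c i"
      using u(2) ti nbhd_row[OF iR] by simp
  next
    assume u: "u \<in> nbhd i \<and> Suc (burn_time c u) = burn_time c i"
    hence "cell n R i u" using nbhd_row[OF iR] by blast
    hence "u \<le> n" "i < u" by (simp_all add: cell_iff)
    thus "u \<in> Ablk (toppling_word c) l \<and> i < u"
      using u ti by (simp add: Ablk_toppling_word[OF st bu])
  qed
  hence "{u \<in> nbhd i. Suc (burn_time c u) = burn_time c i} = {j \<in> Ablk (toppling_word c) l. i < j}"
    by blast
  thus ?thesis by (simp add: prev_degree_def)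
qed

lemma prev_degree_col:
  assumes i: "i \<in> {1..n}" and ti: "burn_time c i + 1 = 2 * l"
  shows "prev_degree (burn_time c) i = card {j \<in> Dblk (toppling_word c) (l - 1). j < i}"
proof -
  have "odd t" if "t + 1 = 2 * l" for t :: nat using that by presburger
  hence iR: "i \<notin> R" using odd_burn_time_iff[OF st bu, of i] i ti by simp
  have "u \<in> nbhd i \<and> Suc (burn_time c u) = burn_time c i
      \<longleftrightarrow> u \<in> Dblk (toppling_word c) (l - 1) \<and> u < i" for u
  proof
    assume "u \<in> Dblk (toppling_word c) (l - 1) \<and> u < i"
    hence u: "u \<le> n" "burn_time c u = 2 * (l - 1)" "u < i"
      by (auto simp: Dblk_toppling_word[OF st bu])
    hence "u \<in> R" using odd_burn_time_iff[OF st bu u(1)] by simp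
    hence "cell n R u i" using u i iR by (simp add: cell_iff)
    moreover have "Suc (burn_time c u) = burn_time c i" using u(2) ti by arith
    ultimately show "u \<in> nbhd i \<and> Suc (burn_time c u) = burn_time c i"
      using nbhd_col[OF iR] by blast
  next
    assume u: "u \<in> nbhd i \<and> Suc (burn_time c u) = burn_time c i"
    hence "cell n R u i" using nbhd_col[OF iR] by blast
    hence "u \<le> n" "u < i" using i by (simp_all add: cell_iff)
    moreover have "burn_time c u = 2 * (l - 1)" using u ti by arith
    ultimately show "u \<in> Dblk (toppling_word c) (l - 1) \<and> u < i"
      by (simp add: Dblk_toppling_word[OF st bu])
  qed
  hence "{u \<in> nbhd i. Suc (burn_time c u) = burn_time c i}
    = {j \<in> Dblk (toppling_word c) (l - 1). j < i}"
    by blast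
  thus ?thesis by (simp add: prev_degree_def)
qed

lemma mu_toppling_word:
  assumes i: "i \<in> {1..n}" shows "mu (toppling_word c) i = prev_degree (burn_time c) i"
proof (cases "even (burn_time c i)")
  case True
  define l where "l = burn_time c i div 2"
  have tl: "burn_time c i = 2 * l" using True by (simp add: l_def)
  have "i \<in> Dblk (toppling_word c) l'  \<longleftrightarrow> l' = l" for l'
    using i tl by (auto simp: Dblk_toppling_word[OF st bu])
  thus ?thesis using prev_degree_row[OF i tl] by (simp add: mu_def)
next
  case False
  define l where "l = (burn_time c i + 1) div 2"
  have tl: "burn_time c i + 1 = 2 * l" using False by (simp add: l_def)
  have "i \<notin> Dblk (toppling_word c) l'" for l'
    using False by (auto simp: Dblk_toppling_word[OF st bu])
  moreover have "i \<in> Ablk (toppling_word c) l' \<longleftrightarrow> l' = l" for l'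
    using i tl by (auto simp: Ablk_toppling_word[OF st bu])
  ultimately show ?thesis using prev_degree_col[OF i tl] by (simp add: mu_def)
qed

lemma decorated_perm_toppling_word:
  assumes bounds: "\<forall>i\<in>{1..n}. 0 \<le> a i \<and> a i < int (prev_degree (burn_time c) i)"
  shows "decorated_perm n (toppling_word c) a"
  unfolding decorated_perm_def
proof (intro conjI ballI allI impI)
  show "is_perm n (toppling_word c)" by (rule is_perm_toppling_word[OF st bu])
next
  fix i assume "i \<in> {1..n}"
  thus "0 \<le> a i" using bounds by blast
next
  fix i l assume i: "i \<in> {1..n}" and "i \<in> Dblk (toppling_word c) l"
  hence tl: "burn_time c i = 2 * l" by (simp add: Dblk_toppling_word[OF st bu])
  have "card {j \<in> Ablk (toppling_word c) l. i < j}
      \<le> card {j. \<exists>k. k \<le> l \<and> j \<in> Ablk (toppling_word c) k \<and> j > i}"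
    by (rule card_mono) (auto simp: Ablk_toppling_word[OF st bu])
  thus "a i < int (card {j. \<exists>k. k \<le> l \<and> j \<in> Ablk (toppling_word c) k \<and> j > i})"
    using bounds i prev_degree_row[OF i tl] by fastforce
next
  fix i l assume i: "i \<in> {1..n}" and "i \<in> Ablk (toppling_word c) l"
  hence tl: "burn_time c i + 1 = 2 * l" by (simp add: Ablk_toppling_word[OF st bu])
  have "{j \<in> Dblk (toppling_word c) (l - 1). j < i}
      \<subseteq> {j. \<exists>k. k < l \<and> j \<in> Dblk (toppling_word c) k \<and> j < i}"
    using tl by (auto intro!: exI[of _ "l - 1"])
  moreover have "finite {j. \<exists>k. k < l \<and> j \<in> Dblk (toppling_word c) k \<and> j < i}"
    by (rule finite_subset[of _ "{..<i}"]) auto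
  ultimately have "card {j \<in> Dblk (toppling_word c) (l - 1). j < i}
      \<le> card {j. \<exists>k. k < l \<and> j \<in> Dblk (toppling_word c) k \<and> j < i}"
    by (simp add: card_mono)
  thus "a i < int (card {j. \<exists>k. k < l \<and> j \<in> Dblk (toppling_word c) k \<and> j < i})"
    using bounds i prev_degree_col[OF i tl] by fastforce
qed

lemma canonical_decorated_perm_toppling_word_iff:
  "canonical_decorated_perm n (toppling_word c) a
     \<longleftrightarrow> (\<forall>i\<in>{1..n}. 0 \<le> a i \<and> a i < int (prev_degree (burn_time c) i))"
proof
  assume "canonical_decorated_perm n (toppling_word c) a"
  thus "\<forall>i\<in>{1..n}. 0 \<le> a i \<and> a i < int (prev_degree (burn_time c) i)"
    using mu_toppling_word unfolding canonical_decorated_perm_def decorated_perm_def by auto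
next
  assume "\<forall>i\<in>{1..n}. 0 \<le> a i \<and> a i < int (prev_degree (burn_time c) i)"
  thus "canonical_decorated_perm n (toppling_word c) a"
    using decorated_perm_toppling_word mu_toppling_word by (simp add: canonical_decorated_perm_def)
qed

end

lemma minrec_eq_phiTC_tableau_of_times:
  assumes "stable n R x" "burns x"
  shows "minrec n R x = phiTC n R (tableau_of_times (burn_time x))"
proof
  fix v show "minrec n R x v = phiTC n R (tableau_of_times (burn_time x)) v"
  proof (cases "v \<in> {1..n}")
    case True
    thus ?thesis using minrec_eq_later_degree[OF assms] phiTC_tableau_of_times[OF assms] by simp
  next
    case False
    thus ?thesis by (simp only: minrec_def phiTC_def if_not_P[OF False] if_False)
  qed
qed

lemma tableau_of_times_burn_time_phiTC:
  assumes T: "T \<in> EWtab n R" shows "tableau_of_times (burn_time (phiTC n R T)) = T"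
proof (intro ext)
  fix i j show "tableau_of_times (burn_time (phiTC n R T)) i j = T i j"
    using EWtab_iff_burn_time[OF T, of i j] EWtab_cell[OF T, of i j]
    by (auto simp: tableau_of_times_def)
qed

lemma RecEW_imp_bounds:
  assumes T: "T \<in> EWtab n R" and "(T, a) \<in> RecEW n R"
  shows "\<forall>i\<in>{1..n}. 0 \<le> a i \<and> a i < int (prev_degree (burn_time (phiTC n R T)) i)"
proof -
  obtain x where x: "x \<in> Rec n R" and Tx: "T = phiCT n R (minrec n R x)"
    and a: "a = (\<lambda>i. if i \<in> {1..n} then int (x i) - int (minrec n R x i) else 0)"
    using assms(2) unfolding RecEW_def by auto
  have st: "stable n R x" and bu: "burns x" using x Rec_iff_burns by auto
  have "phiTC n R T = minrec n R x"
    using Tx minrec_eq_phiTC_tableau_of_times[OF st bu]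
      phiCT_phiTC[OF tableau_of_times_EWtab[OF st bu]]
    by simp
  hence c: "phiTC n R T v = later_degree (burn_time x) v" if "v \<in> {1..n}" for v
    using minrec_eq_later_degree[OF st bu that] by simp
  have "burning_bounds (burn_time x) (phiTC n R T)"
    using c prev_degree_pos[OF st bu] by (simp add: burning_bounds_def Suc_le_eq)
  hence same: "burn_time (phiTC n R T) = burn_time x"
    by (rule burn_time_eq_if_burning_bounds(2)[OF st bu])
  show ?thesis
  proof
    fix i assume i: "i \<in> {1..n}"
    have "a i = int (x i) - int (later_degree (burn_time x) i)"
      using a minrec_eq_later_degree[OF st bu i] i by simp
    thus "0 \<le> a i \<and> a i < int (prev_degree (burn_time (phiTC n R T)) i)"
      using same later_degree_le[OF st bu i] less_later_plus_prev_degree[OF st bu i] by simp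
  qed
qed

lemma RecEW_if_bounds:
  assumes T: "T \<in> EWtab n R" and a0: "\<forall>i. i \<notin> {1..n} \<longrightarrow> a i = 0"
    and bounds: "\<forall>i\<in>{1..n}. 0 \<le> a i \<and> a i < int (prev_degree (burn_time (phiTC n R T)) i)"
  shows "(T, a) \<in> RecEW n R"
proof -
  let ?c = "phiTC n R T"
  define x where "x i = ?c i + nat (a i)" for i
  have st: "stable n R ?c" and bu: "burns ?c" using stable_phiTC[OF T] burns_phiTC[OF T] .
  have "burning_bounds (burn_time ?c) x"
    using bounds phiTC_eq_later_degree[OF T] by (auto simp: burning_bounds_def x_def)
  hence x: "stable n R x" "burns x" "burn_time x = burn_time ?c"
    using stable_if_burning_bounds burn_time_eq_if_burning_bounds st bu by blast+
  have "config n x" using config_phiTC[OF T] a0 by (simp add: config_def x_def)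
  hence "x \<in> Rec n R" using x Rec_iff_burns by blast
  moreover have "minrec n R x = ?c"
    using minrec_eq_phiTC_tableau_of_times[OF x(1,2)] x(3) tableau_of_times_burn_time_phiTC[OF T]
    by simp
  moreover have "a = (\<lambda>i. if i \<in> {1..n} then int (x i) - int (minrec n R x i) else 0)"
    using a0 bounds \<open>minrec n R x = ?c\<close> by (auto simp: x_def)
  ultimately show ?thesis unfolding RecEW_def using phiCT_phiTC[OF T]
    by (intro image_eqI[of _ _ x]) simp_all
qed

end

theorem corollary5p5:
  fixes n :: nat and R :: "nat set" and T :: "nat \<Rightarrow> nat \<Rightarrow> bool" and a :: "nat \<Rightarrow> int"
  assumes "ferrers n R"
    and "T \<in> EWtab n R"
    and "\<forall>i. i \<notin> {1..n} \<longrightarrow> a i = 0"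
  shows "(T, a) \<in> RecEW n R \<longleftrightarrow> canonical_decorated_perm n (Psi n R T) a"
proof -
  interpret ferrers_diagram n R by (rule ferrers_diagram.intro) fact
  have "canonical_decorated_perm n (Psi n R T) a
      \<longleftrightarrow> (\<forall>i\<in>{1..n}. 0 \<le> a i \<and> a i < int (prev_degree (burn_time (phiTC n R T)) i))"
    unfolding Psi_eq_toppling_word
    by (rule canonical_decorated_perm_toppling_word_iff[OF stable_phiTC burns_phiTC]) fact+
  thus ?thesis using RecEW_imp_bounds RecEW_if_bounds assms(2,3) by blast
qed

end
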